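(* Let $\mathcal C$ be a category and $S\colon\mathcal C\to\mathcal C$ an auto-equivalence. Then: (1) $S'$ is an automorphism of the category $\mathcal C_{/S}\#\mathbb Z$; (2) $H\colon\mathcal C\to\mathcal C_{/S}\#\mathbb Z$ is an equivalence; (3) $S'H\cong HS$ (natural isomorphism).
   Context: $\Bbbk$ is a commutative ring; all categories and functors are $\Bbbk$-linear. The colimit orbit category $\mathcal C_{/S}$ is the $\mathbb Z$-graded category with the objects of $\mathcal C$ and $\mathcal C_{/S}(X,Y)=\bigoplus_{r\in\mathbb Z}\mathcal C^r_{/S}(X,Y)$, where $\mathcal C^r_{/S}(X,Y):=\varinjlim_{m\ge r}\mathcal C(S^{m-r}X,S^mY)$, the transition maps $\mathcal C(S^{m-r}X,S^mY)\to\mathcal C(S^{m+1-r}X,S^{m+1}Y)$ being given by $S$; composition of $[g]\in\mathcal C^b_{/S}(Y,Z)$ represented by $g\colon S^{m-b}Y\to S^mZ$ and $[f]\in\mathcal C^a_{/S}(X,Y)$ represented by $f\colon S^{m-b-a}X\to S^{m-b}Y$ is $[gf]\in\mathcal C^{a+b}_{/S}(X,Z)$, extended bilinearly. For a $\mathbb Z$-graded category $\mathcal B$, $\mathcal B\#\mathbb Z$ has objects $X^{(i)}$ ($X\in\mathcal B$, $i\in\mathbb Z$), $(\mathcal B\#\mathbb Z)(X^{(i)},Y^{(j)})=\mathcal B^{i-j}(X,Y)$, composition from $\mathcal B$. $S'\colon\mathcal C_{/S}\#\mathbb Z\to\mathcal C_{/S}\#\mathbb Z$ is $S'X^{(i)}=X^{(i-1)}$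 and the identity map $\mathcal C^{i-j}_{/S}(X,Y)\to\mathcal C^{i-j}_{/S}(X,Y)$ on morphisms. $H\colon\mathcal C\to\mathcal C_{/S}\#\mathbb Z$ is $HX=X^{(0)}$, $Hf=[f]\in\varinjlim_{m\ge0}\mathcal C(S^mX,S^mY)$. *)

theory Defs
  imports Main
begin

text \<open>Composition,
identities and the k-module structure of each hom-set are indexed by the
objects involved (so different hom-sets may share elements of the type).\<close>

record ('o, 'm, 'k) lcat =
  cOb   :: "'o set"
  cHom  :: "'o \<Rightarrow> 'o \<Rightarrow> 'm set"
  cComp :: "'o \<Rightarrow> 'o \<Rightarrow> 'o \<Rightarrow> 'm \<Rightarrow> 'm \<Rightarrow> 'm"
  cId   :: "'o \<Rightarrow> 'm"
  cAdd  :: "'o \<Rightarrow> 'o \<Rightarrow> 'm \<Rightarrow> 'm \<Rightarrow> 'm"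
  cZero :: "'o \<Rightarrow> 'o \<Rightarrow> 'm"
  cSmul :: "'o \<Rightarrow> 'o \<Rightarrow> 'k \<Rightarrow> 'm \<Rightarrow> 'm"

definition hom_module :: "('o, 'm, 'k::comm_ring_1) lcat \<Rightarrow> 'o \<Rightarrow> 'o \<Rightarrow> bool" where
  "hom_module C X Y \<longleftrightarrow>
    (let M = cHom C X Y; ad = cAdd C X Y; z = cZero C X Y; sm = cSmul C X Y in
      z \<in> M \<and>
      (\<forall>f\<in>M. \<forall>g\<in>M. ad f g \<in> M) \<and>
      (\<forall>a. \<forall>f\<in>M. sm a f \<in> M) \<and>
      (\<forall>f\<in>M. \<forall>g\<in>M. \<forall>h\<in>M. ad (ad f g) h = ad f (ad g h)) \<and>
      (\<forall>f\<in>M. \<forall>g\<in>M. ad f g = ad g f) \<and>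
      (\<forall>f\<in>M. ad z f = f) \<and>
      (\<forall>f\<in>M. \<exists>g\<in>M. ad f g = z) \<and>
      (\<forall>a. \<forall>f\<in>M. \<forall>g\<in>M. sm a (ad f g) = ad (sm a f) (sm a g)) \<and>
      (\<forall>a b. \<forall>f\<in>M. sm (a + b) f = ad (sm a f) (sm b f)) \<and>
      (\<forall>a b. \<forall>f\<in>M. sm (a * b) f = sm a (sm b f)) \<and>
      (\<forall>f\<in>M. sm 1 f = f))"

definition klin_cat :: "('o, 'm, 'k::comm_ring_1) lcat \<Rightarrow> bool" where
  "klin_cat C \<longleftrightarrow>
    (\<forall>X\<in>cOb C. \<forall>Y\<in>cOb C. hom_module C X Y) \<and>
    (\<forall>X\<in>cOb C. cId C X \<in> cHom C X X) \<and>
    (\<forall>X\<in>cOb C. \<forall>Y\<in>cOb C. \<forall>Z\<in>cOb C. \<forall>f\<in>cHom C X Y. \<forall>g\<in>cHom C Y Z.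
        cComp C X Y Z g f \<in> cHom C X Z) \<and>
    (\<forall>W\<in>cOb C. \<forall>X\<in>cOb C. \<forall>Y\<in>cOb C. \<forall>Z\<in>cOb C.
       \<forall>f\<in>cHom C W X. \<forall>g\<in>cHom C X Y. \<forall>h\<in>cHom C Y Z.
        cComp C W Y Z h (cComp C W X Y g f) = cComp C W X Z (cComp C X Y Z h g) f) \<and>
    (\<forall>X\<in>cOb C. \<forall>Y\<in>cOb C. \<forall>f\<in>cHom C X Y.
        cComp C X Y Y (cId C Y) f = f \<and> cComp C X X Y f (cId C X) = f) \<and>
    (\<forall>X\<in>cOb C. \<forall>Y\<in>cOb C. \<forall>Z\<in>cOb C. \<forall>f\<in>cHom C X Y. \<forall>f'\<in>cHom C X Y.
       \<forall>g\<in>cHom C Y Z. \<forall>g'\<in>cHom C Y Z. \<forall>a.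
        cComp C X Y Z (cAdd C Y Z g g') f = cAdd C X Z (cComp C X Y Z g f) (cComp C X Y Z g' f) \<and>
        cComp C X Y Z g (cAdd C X Y f f') = cAdd C X Z (cComp C X Y Z g f) (cComp C X Y Z g f') \<and>
        cComp C X Y Z (cSmul C Y Z a g) f = cSmul C X Z a (cComp C X Y Z g f) \<and>
        cComp C X Y Z g (cSmul C X Y a f) = cSmul C X Z a (cComp C X Y Z g f))"

record ('o, 'm, 'p, 'n) lfun =
  fob  :: "'o \<Rightarrow> 'p"
  fmor :: "'o \<Rightarrow> 'o \<Rightarrow> 'm \<Rightarrow> 'n"

definition klin_functor ::
  "('o, 'm, 'k::comm_ring_1) lcat \<Rightarrow> ('p, 'n, 'k) lcat \<Rightarrow> ('o, 'm, 'p, 'n) lfun \<Rightarrow> bool" where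
  "klin_functor C D F \<longleftrightarrow> klin_cat C \<and> klin_cat D \<and>
    (\<forall>X\<in>cOb C. fob F X \<in> cOb D) \<and>
    (\<forall>X\<in>cOb C. \<forall>Y\<in>cOb C. \<forall>f\<in>cHom C X Y. fmor F X Y f \<in> cHom D (fob F X) (fob F Y)) \<and>
    (\<forall>X\<in>cOb C. fmor F X X (cId C X) = cId D (fob F X)) \<and>
    (\<forall>X\<in>cOb C. \<forall>Y\<in>cOb C. \<forall>Z\<in>cOb C. \<forall>f\<in>cHom C X Y. \<forall>g\<in>cHom C Y Z.
       fmor F X Z (cComp C X Y Z g f) = cComp D (fob F X) (fob F Y) (fob F Z) (fmor F Y Z g) (fmor F X Y f)) \<and>
    (\<forall>X\<in>cOb C. \<forall>Y\<in>cOb C. \<forall>f\<in>cHom C X Y. \<forall>g\<in>cHom C X Y. \<forall>a.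
       fmor F X Y (cAdd C X Y f g) = cAdd D (fob F X) (fob F Y) (fmor F X Y f) (fmor F X Y g) \<and>
       fmor F X Y (cSmul C X Y a f) = cSmul D (fob F X) (fob F Y) a (fmor F X Y f))"

definition fid :: "('o, 'm, 'o, 'm) lfun" where
  "fid = \<lparr>fob = (\<lambda>X. X), fmor = (\<lambda>X Y f. f)\<rparr>"

definition fun_comp :: "('p, 'n, 'q, 'r) lfun \<Rightarrow> ('o, 'm, 'p, 'n) lfun \<Rightarrow> ('o, 'm, 'q, 'r) lfun" where
  "fun_comp G F = \<lparr>fob = (\<lambda>X. fob G (fob F X)),
                fmor = (\<lambda>X Y f. fmor G (fob F X) (fob F Y) (fmor F X Y f))\<rparr>"

definition is_iso :: "('o, 'm, 'k) lcat \<Rightarrow> 'o \<Rightarrow> 'o \<Rightarrow> 'm \<Rightarrow> bool" where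
  "is_iso D X Y u \<longleftrightarrow> u \<in> cHom D X Y \<and>
     (\<exists>v\<in>cHom D Y X. cComp D X Y X v u = cId D X \<and> cComp D Y X Y u v = cId D Y)"

definition nat_iso ::
  "('o, 'm, 'k::comm_ring_1) lcat \<Rightarrow> ('p, 'n, 'k) lcat \<Rightarrow> ('o, 'm, 'p, 'n) lfun \<Rightarrow>
   ('o, 'm, 'p, 'n) lfun \<Rightarrow> ('o \<Rightarrow> 'n) \<Rightarrow> bool" where
  "nat_iso C D F G \<eta> \<longleftrightarrow> klin_functor C D F \<and> klin_functor C D G \<and>
    (\<forall>X\<in>cOb C. is_iso D (fob F X) (fob G X) (\<eta> X)) \<and>
    (\<forall>X\<in>cOb C. \<forall>Y\<in>cOb C. \<forall>f\<in>cHom C X Y.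
       cComp D (fob F X) (fob G X) (fob G Y) (fmor G X Y f) (\<eta> X)
     = cComp D (fob F X) (fob F Y) (fob G Y) (\<eta> Y) (fmor F X Y f))"

definition klin_equivalence ::
  "('o, 'm, 'k::comm_ring_1) lcat \<Rightarrow> ('p, 'n, 'k) lcat \<Rightarrow> ('o, 'm, 'p, 'n) lfun \<Rightarrow> bool" where
  "klin_equivalence C D F \<longleftrightarrow> klin_functor C D F \<and>
    (\<exists>G :: ('p, 'n, 'o, 'm) lfun. klin_functor D C G \<and>
       (\<exists>\<eta>. nat_iso C C fid (fun_comp G F) \<eta>) \<and>
       (\<exists>\<epsilon>. nat_iso D D (fun_comp F G) fid \<epsilon>))"

definition klin_automorphism :: "('o, 'm, 'k::comm_ring_1) lcat \<Rightarrow> ('o, 'm, 'o, 'm) lfun \<Rightarrow> bool" where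
  "klin_automorphism C F \<longleftrightarrow> klin_functor C C F \<and>
    (\<exists>G. klin_functor C C G \<and>
       (\<forall>X\<in>cOb C. fob G (fob F X) = X \<and> fob F (fob G X) = X) \<and>
       (\<forall>X\<in>cOb C. \<forall>Y\<in>cOb C. \<forall>f\<in>cHom C X Y.
          fmor (fun_comp G F) X Y f = f \<and> fmor (fun_comp F G) X Y f = f))"

definition Spow :: "('o, 'm, 'o, 'm) lfun \<Rightarrow> nat \<Rightarrow> 'o \<Rightarrow> 'o" where
  "Spow S k X = (fob S ^^ k) X"

fun Smpow :: "('o, 'm, 'o, 'm) lfun \<Rightarrow> nat \<Rightarrow> 'o \<Rightarrow> 'o \<Rightarrow> 'm \<Rightarrow> 'm" where
  "Smpow S 0 X Y f = f"
| "Smpow S (Suc k) X Y f = fmor S (Spow S k X) (Spow S k Y) (Smpow S k X Y f)"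

text \<open>A representative of an element of C^r_{/S}(X,Y) is a triple (n,p,f) with
f : S^n X \<rightarrow> S^p Y and p - n = r (so n = m - r, p = m, with n,p \<ge> 0).
Two representatives are identified iff they become equal after applying
suitable powers of S (the transition maps of the directed system).\<close>

definition orb_reps :: "('o, 'm, 'k) lcat \<Rightarrow> ('o, 'm, 'o, 'm) lfun \<Rightarrow> 'o \<Rightarrow> 'o \<Rightarrow> int
    \<Rightarrow> (nat \<times> nat \<times> 'm) set" where
  "orb_reps C S X Y r = {(n, p, f). int p - int n = r \<and> f \<in> cHom C (Spow S n X) (Spow S p Y)}"

definition orb_rel :: "('o, 'm, 'k) lcat \<Rightarrow> ('o, 'm, 'o, 'm) lfun \<Rightarrow> 'o \<Rightarrow> 'o \<Rightarrow> int
    \<Rightarrow> ((nat \<times> nat \<times> 'm) \<times> (nat \<times> nat \<times> 'm)) set" where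
  "orb_rel C S X Y r = {((n, p, f), (n', p', f')).
      (n, p, f) \<in> orb_reps C S X Y r \<and> (n', p', f') \<in> orb_reps C S X Y r \<and>
      (\<exists>k k'. n + k = n' + k' \<and>
         Smpow S k (Spow S n X) (Spow S p Y) f = Smpow S k' (Spow S n' X) (Spow S p' Y) f')}"

definition orb_hom :: "('o, 'm, 'k) lcat \<Rightarrow> ('o, 'm, 'o, 'm) lfun \<Rightarrow> 'o \<Rightarrow> 'o \<Rightarrow> int
    \<Rightarrow> (nat \<times> nat \<times> 'm) set set" where
  "orb_hom C S X Y r = orb_reps C S X Y r // orb_rel C S X Y r"

definition orb_cls :: "('o, 'm, 'k) lcat \<Rightarrow> ('o, 'm, 'o, 'm) lfun \<Rightarrow> 'o \<Rightarrow> 'o \<Rightarrow> int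
    \<Rightarrow> nat \<times> nat \<times> 'm \<Rightarrow> (nat \<times> nat \<times> 'm) set" where
  "orb_cls C S X Y r a = orb_rel C S X Y r `` {a}"

definition orb_add :: "('o, 'm, 'k) lcat \<Rightarrow> ('o, 'm, 'o, 'm) lfun \<Rightarrow> 'o \<Rightarrow> 'o \<Rightarrow> int
    \<Rightarrow> (nat \<times> nat \<times> 'm) set \<Rightarrow> (nat \<times> nat \<times> 'm) set \<Rightarrow> (nat \<times> nat \<times> 'm) set" where
  "orb_add C S X Y r c d =
    (case SOME a. a \<in> c of (n, p, f) \<Rightarrow>
     case SOME a. a \<in> d of (n', p', f') \<Rightarrow>
       (let N = max n n'; P = p + (N - n) in
        orb_cls C S X Y r (N, P,
          cAdd C (Spow S N X) (Spow S P Y)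
            (Smpow S (N - n) (Spow S n X) (Spow S p Y) f)
            (Smpow S (N - n') (Spow S n' X) (Spow S p' Y) f'))))"

definition orb_zero :: "('o, 'm, 'k) lcat \<Rightarrow> ('o, 'm, 'o, 'm) lfun \<Rightarrow> 'o \<Rightarrow> 'o \<Rightarrow> int
    \<Rightarrow> (nat \<times> nat \<times> 'm) set" where
  "orb_zero C S X Y r = orb_cls C S X Y r
     (nat (- r), nat r, cZero C (Spow S (nat (- r)) X) (Spow S (nat r) Y))"

definition orb_smul :: "('o, 'm, 'k) lcat \<Rightarrow> ('o, 'm, 'o, 'm) lfun \<Rightarrow> 'o \<Rightarrow> 'o \<Rightarrow> int
    \<Rightarrow> 'k \<Rightarrow> (nat \<times> nat \<times> 'm) set \<Rightarrow> (nat \<times> nat \<times> 'm) set" where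
  "orb_smul C S X Y r a c =
    (case SOME x. x \<in> c of (n, p, f) \<Rightarrow>
       orb_cls C S X Y r (n, p, cSmul C (Spow S n X) (Spow S p Y) a f))"

text \<open>Composition of [g] in C^b(Y,Z) with [f] in C^a(X,Y): lift both representatives
so that they meet at a common power of S applied to Y, then compose.\<close>

definition orb_comp :: "('o, 'm, 'k) lcat \<Rightarrow> ('o, 'm, 'o, 'm) lfun \<Rightarrow> 'o \<Rightarrow> 'o \<Rightarrow> 'o \<Rightarrow> int \<Rightarrow> int
    \<Rightarrow> (nat \<times> nat \<times> 'm) set \<Rightarrow> (nat \<times> nat \<times> 'm) set \<Rightarrow> (nat \<times> nat \<times> 'm) set" where
  "orb_comp C S X Y Z b a g f =
    (case SOME x. x \<in> g of (n1, p1, g0) \<Rightarrow>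
     case SOME x. x \<in> f of (n2, p2, f0) \<Rightarrow>
       (let N = max n1 p2; s = n2 + (N - p2); t = p1 + (N - n1) in
        orb_cls C S X Z (a + b) (s, t,
          cComp C (Spow S s X) (Spow S N Y) (Spow S t Z)
            (Smpow S (N - n1) (Spow S n1 Y) (Spow S p1 Z) g0)
            (Smpow S (N - p2) (Spow S n2 X) (Spow S p2 Y) f0))))"

section \<open>The smash product C_{/S} # Z, the functors S' and H\<close>

definition orbit_smash :: "('o, 'm, 'k) lcat \<Rightarrow> ('o, 'm, 'o, 'm) lfun
    \<Rightarrow> ('o \<times> int, (nat \<times> nat \<times> 'm) set, 'k) lcat" where
  "orbit_smash C S = \<lparr>
     cOb = cOb C \<times> UNIV,
     cHom = (\<lambda>(X, i) (Y, j). orb_hom C S X Y (i - j)),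
     cComp = (\<lambda>(X, i) (Y, j) (Z, k) g f. orb_comp C S X Y Z (j - k) (i - j) g f),
     cId = (\<lambda>(X, i). orb_cls C S X X 0 (0, 0, cId C X)),
     cAdd = (\<lambda>(X, i) (Y, j). orb_add C S X Y (i - j)),
     cZero = (\<lambda>(X, i) (Y, j). orb_zero C S X Y (i - j)),
     cSmul = (\<lambda>(X, i) (Y, j). orb_smul C S X Y (i - j)) \<rparr>"

definition shift_functor :: "('o \<times> int, 'x, 'o \<times> int, 'x) lfun" where
  "shift_functor = \<lparr>fob = (\<lambda>(X, i). (X, i - 1)), fmor = (\<lambda>_ _ f. f)\<rparr>"

definition H_functor :: "('o, 'm, 'k) lcat \<Rightarrow> ('o, 'm, 'o, 'm) lfun
    \<Rightarrow> ('o, 'm, 'o \<times> int, (nat \<times> nat \<times> 'm) set) lfun" where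
  "H_functor C S = \<lparr>fob = (\<lambda>X. (X, 0)), fmor = (\<lambda>X Y f. orb_cls C S X Y 0 (0, 0, f))\<rparr>"

end

theory Submission
  imports Defs
begin

(* Since S is an auto-equivalence, it is fully faithful, so every class
   of degree r has exactly one representative starting at each level m >= -r (obtained by
   applying or undoing powers of S).  Calling this representative "the component of c at level m",
   all operations on classes (sum, scalar multiple, composition) are computed componentwise at
   all sufficiently large levels, and two classes are equal as soon as their components agree
   eventually.  This reduces every axiom of a k-linear category for C_{/S} # Z to the
   corresponding axiom of C.

   Finally:
   (1) S' is a strict automorphism with inverse X^(i) |-> X^(i+1);
   (2) H is fully faithful (degree-0 classes are determined by their level-0 component) and
       essentially surjective (X^(i) is isomorphic to S^(-i)X^(0), resp. to Y^(0) when
       X is isomorphic to S^i Y), hence an equivalence;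
   (3) the classes [id_{SX}] of degree -1 form a natural isomorphism S'H = HS. *)

lemma hm_zero: assumes "hom_module C X Y" shows "cZero C X Y \<in> cHom C X Y"
  using assms unfolding hom_module_def Let_def by meson

lemma hm_addc: assumes "hom_module C X Y"
  shows "f \<in> cHom C X Y \<Longrightarrow> g \<in> cHom C X Y \<Longrightarrow> cAdd C X Y f g \<in> cHom C X Y"
  using assms unfolding hom_module_def Let_def by meson

lemma hm_smulc: assumes "hom_module C X Y"
  shows "f \<in> cHom C X Y \<Longrightarrow> cSmul C X Y a f \<in> cHom C X Y"
  using assms unfolding hom_module_def Let_def by meson

lemma hm_assoc: assumes "hom_module C X Y"
  shows "f \<in> cHom C X Y \<Longrightarrow> g \<in> cHom C X Y \<Longrightarrow> h \<in> cHom C X Y \<Longrightarrow>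
    cAdd C X Y (cAdd C X Y f g) h = cAdd C X Y f (cAdd C X Y g h)"
  using assms unfolding hom_module_def Let_def by meson

lemma hm_comm: assumes "hom_module C X Y"
  shows "f \<in> cHom C X Y \<Longrightarrow> g \<in> cHom C X Y \<Longrightarrow> cAdd C X Y f g = cAdd C X Y g f"
  using assms unfolding hom_module_def Let_def by meson

lemma hm_zl: assumes "hom_module C X Y"
  shows "f \<in> cHom C X Y \<Longrightarrow> cAdd C X Y (cZero C X Y) f = f"
  using assms unfolding hom_module_def Let_def by meson

lemma hm_neg: assumes "hom_module C X Y"
  shows "f \<in> cHom C X Y \<Longrightarrow> \<exists>g\<in>cHom C X Y. cAdd C X Y f g = cZero C X Y"
  using assms unfolding hom_module_def Let_def by meson

lemma hm_sadd: assumes "hom_module C X Y"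
  shows "f \<in> cHom C X Y \<Longrightarrow> g \<in> cHom C X Y \<Longrightarrow>
    cSmul C X Y a (cAdd C X Y f g) = cAdd C X Y (cSmul C X Y a f) (cSmul C X Y a g)"
  using assms unfolding hom_module_def Let_def by meson

lemma hm_adds: assumes "hom_module C X Y"
  shows "f \<in> cHom C X Y \<Longrightarrow> cSmul C X Y (a + b) f = cAdd C X Y (cSmul C X Y a f) (cSmul C X Y b f)"
  using assms unfolding hom_module_def Let_def by meson

lemma hm_muls: assumes "hom_module C X Y"
  shows "f \<in> cHom C X Y \<Longrightarrow> cSmul C X Y (a * b) f = cSmul C X Y a (cSmul C X Y b f)"
  using assms unfolding hom_module_def Let_def by meson

lemma hm_ones: assumes "hom_module C X Y"
  shows "f \<in> cHom C X Y \<Longrightarrow> cSmul C X Y 1 f = f"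
  using assms unfolding hom_module_def Let_def by meson

lemma hm_idem_zero:
  assumes hm: "hom_module C X Y" and x: "x \<in> cHom C X Y" and idem: "cAdd C X Y x x = x"
  shows "x = cZero C X Y"
proof -
  obtain g where g: "g \<in> cHom C X Y" "cAdd C X Y x g = cZero C X Y"
    using hm_neg[OF hm x] by blast
  have "cZero C X Y = cAdd C X Y (cAdd C X Y x x) g" using idem g by simp
  also have "\<dots> = cAdd C X Y x (cZero C X Y)" using hm_assoc[OF hm x x g(1)] g by simp
  also have "\<dots> = x" using hm_comm[OF hm x hm_zero[OF hm]] hm_zl[OF hm x] by simp
  finally show ?thesis by simp
qed

context
  fixes C :: "('o, 'm, 'k::comm_ring_1) lcat"
  assumes KC: "klin_cat C"
begin

lemma kc_hm: "X \<in> cOb C \<Longrightarrow> Y \<in> cOb C \<Longrightarrow> hom_module C X Y"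
  using KC unfolding klin_cat_def by simp

lemma kc_id: "X \<in> cOb C \<Longrightarrow> cId C X \<in> cHom C X X"
  using KC unfolding klin_cat_def by simp

lemma kc_comp: "X \<in> cOb C \<Longrightarrow> Y \<in> cOb C \<Longrightarrow> Z \<in> cOb C \<Longrightarrow> f \<in> cHom C X Y \<Longrightarrow> g \<in> cHom C Y Z
   \<Longrightarrow> cComp C X Y Z g f \<in> cHom C X Z"
  using KC unfolding klin_cat_def by simp

lemma kc_assoc: "W \<in> cOb C \<Longrightarrow> X \<in> cOb C \<Longrightarrow> Y \<in> cOb C \<Longrightarrow> Z \<in> cOb C \<Longrightarrow>
   f \<in> cHom C W X \<Longrightarrow> g \<in> cHom C X Y \<Longrightarrow> h \<in> cHom C Y Z \<Longrightarrow>
   cComp C W Y Z h (cComp C W X Y g f) = cComp C W X Z (cComp C X Y Z h g) f"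
  using KC unfolding klin_cat_def by simp

lemma kc_idl: "X \<in> cOb C \<Longrightarrow> Y \<in> cOb C \<Longrightarrow> f \<in> cHom C X Y \<Longrightarrow> cComp C X Y Y (cId C Y) f = f"
  using KC unfolding klin_cat_def by simp

lemma kc_idr: "X \<in> cOb C \<Longrightarrow> Y \<in> cOb C \<Longrightarrow> f \<in> cHom C X Y \<Longrightarrow> cComp C X X Y f (cId C X) = f"
  using KC unfolding klin_cat_def by simp

lemma kc_bilin:
  assumes "X \<in> cOb C" "Y \<in> cOb C" "Z \<in> cOb C"
  shows "f \<in> cHom C X Y \<Longrightarrow> g \<in> cHom C Y Z \<Longrightarrow> g' \<in> cHom C Y Z \<Longrightarrow>
      cComp C X Y Z (cAdd C Y Z g g') f = cAdd C X Z (cComp C X Y Z g f) (cComp C X Y Z g' f)"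
    "f \<in> cHom C X Y \<Longrightarrow> f' \<in> cHom C X Y \<Longrightarrow> g \<in> cHom C Y Z \<Longrightarrow>
      cComp C X Y Z g (cAdd C X Y f f') = cAdd C X Z (cComp C X Y Z g f) (cComp C X Y Z g f')"
    "f \<in> cHom C X Y \<Longrightarrow> g \<in> cHom C Y Z \<Longrightarrow>
      cComp C X Y Z (cSmul C Y Z a g) f = cSmul C X Z a (cComp C X Y Z g f)"
    "f \<in> cHom C X Y \<Longrightarrow> g \<in> cHom C Y Z \<Longrightarrow>
      cComp C X Y Z g (cSmul C X Y a f) = cSmul C X Z a (cComp C X Y Z g f)"
  using KC assms unfolding klin_cat_def by blast+

end

context
  fixes C :: "('o, 'm, 'k::comm_ring_1) lcat" and D :: "('p, 'n, 'k) lcat"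
    and F :: "('o, 'm, 'p, 'n) lfun"
  assumes KF: "klin_functor C D F"
begin

lemma kf_C: "klin_cat C" and kf_D: "klin_cat D"
  using KF unfolding klin_functor_def by simp_all

lemma kf_ob: "X \<in> cOb C \<Longrightarrow> fob F X \<in> cOb D"
  using KF unfolding klin_functor_def by simp

lemma kf_hom: "X \<in> cOb C \<Longrightarrow> Y \<in> cOb C \<Longrightarrow> f \<in> cHom C X Y \<Longrightarrow>
    fmor F X Y f \<in> cHom D (fob F X) (fob F Y)"
  using KF unfolding klin_functor_def by simp

lemma kf_id: "X \<in> cOb C \<Longrightarrow> fmor F X X (cId C X) = cId D (fob F X)"
  using KF unfolding klin_functor_def by simp

lemma kf_comp: "X \<in> cOb C \<Longrightarrow> Y \<in> cOb C \<Longrightarrow> Z \<in> cOb C \<Longrightarrow> f \<in> cHom C X Y \<Longrightarrow> g \<in> cHom C Y Z \<Longrightarrow>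
   fmor F X Z (cComp C X Y Z g f)
     = cComp D (fob F X) (fob F Y) (fob F Z) (fmor F Y Z g) (fmor F X Y f)"
  using KF unfolding klin_functor_def by simp

lemma kf_add: "X \<in> cOb C \<Longrightarrow> Y \<in> cOb C \<Longrightarrow> f \<in> cHom C X Y \<Longrightarrow> g \<in> cHom C X Y \<Longrightarrow>
   fmor F X Y (cAdd C X Y f g) = cAdd D (fob F X) (fob F Y) (fmor F X Y f) (fmor F X Y g)"
  using KF unfolding klin_functor_def by simp

lemma kf_smul: "X \<in> cOb C \<Longrightarrow> Y \<in> cOb C \<Longrightarrow> f \<in> cHom C X Y \<Longrightarrow>
   fmor F X Y (cSmul C X Y a f) = cSmul D (fob F X) (fob F Y) a (fmor F X Y f)"
  using KF unfolding klin_functor_def by simp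

lemma kf_zero:
  assumes X: "X \<in> cOb C" and Y: "Y \<in> cOb C"
  shows "fmor F X Y (cZero C X Y) = cZero D (fob F X) (fob F Y)"
proof -
  have hC: "hom_module C X Y" using kc_hm[OF kf_C X Y] .
  have hD: "hom_module D (fob F X) (fob F Y)" using kc_hm[OF kf_D kf_ob[OF X] kf_ob[OF Y]] .
  have z: "cZero C X Y \<in> cHom C X Y" using hm_zero[OF hC] .
  have "cAdd D (fob F X) (fob F Y) (fmor F X Y (cZero C X Y)) (fmor F X Y (cZero C X Y))
      = fmor F X Y (cZero C X Y)"
    using kf_add[OF X Y z z] hm_zl[OF hC z] by simp
  then show ?thesis using hm_idem_zero[OF hD kf_hom[OF X Y z]] by simp
qed

end

lemma fid_simps[simp]: "fob fid X = X" "fmor fid X Y f = f"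
  by (simp_all add: fid_def)

lemma fun_comp_simps[simp]: "fob (fun_comp G F) X = fob G (fob F X)"
  "fmor (fun_comp G F) X Y f = fmor G (fob F X) (fob F Y) (fmor F X Y f)"
  by (simp_all add: fun_comp_def)

lemma kf_fid: "klin_cat C \<Longrightarrow> klin_functor C C fid"
  unfolding klin_functor_def by simp

lemma kf_compose:
  assumes F: "klin_functor C D F" and G: "klin_functor D E G"
  shows "klin_functor C E (fun_comp G F)"
  unfolding klin_functor_def fun_comp_simps
  using kf_C[OF F] kf_D[OF G] kf_ob[OF F] kf_ob[OF G] kf_hom[OF F] kf_hom[OF G]
  by (simp add: kf_id[OF F] kf_id[OF G] kf_comp[OF F] kf_comp[OF G] kf_add[OF F] kf_add[OF G]
      kf_smul[OF F] kf_smul[OF G])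

lemma iso_hom: "is_iso C X Y u \<Longrightarrow> u \<in> cHom C X Y"
  by (simp add: is_iso_def)

lemma iso_inv:
  assumes "is_iso C X Y u"
  obtains v where "is_iso C Y X v" "cComp C X Y X v u = cId C X" "cComp C Y X Y u v = cId C Y"
  using assms unfolding is_iso_def by blast

context
  fixes C :: "('o, 'm, 'k::comm_ring_1) lcat"
  assumes KC: "klin_cat C"
begin

lemma iso_cancel_left:
  assumes X: "X \<in> cOb C" and Y: "Y \<in> cOb C" and Z: "Z \<in> cOb C" and u: "is_iso C Y Z u"
    and f: "f \<in> cHom C X Y" and g: "g \<in> cHom C X Y"
    and eq: "cComp C X Y Z u f = cComp C X Y Z u g"
  shows "f = g"
proof -
  obtain v where v: "v \<in> cHom C Z Y" "cComp C Y Z Y v u = cId C Y"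
    using u unfolding is_iso_def by blast
  have uh: "u \<in> cHom C Y Z" using iso_hom[OF u] .
  have "cComp C X Y Y (cComp C Y Z Y v u) f = cComp C X Z Y v (cComp C X Y Z u f)"
    using kc_assoc[OF KC X Y Z Y f uh v(1)] by simp
  also have "\<dots> = cComp C X Y Y (cComp C Y Z Y v u) g"
    using eq kc_assoc[OF KC X Y Z Y g uh v(1)] by simp
  finally show ?thesis using v(2) kc_idl[OF KC X Y f] kc_idl[OF KC X Y g] by simp
qed

lemma iso_cancel_right:
  assumes X: "X \<in> cOb C" and Y: "Y \<in> cOb C" and Z: "Z \<in> cOb C" and u: "is_iso C X Y u"
    and f: "f \<in> cHom C Y Z" and g: "g \<in> cHom C Y Z"
    and eq: "cComp C X Y Z f u = cComp C X Y Z g u"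
  shows "f = g"
proof -
  obtain v where v: "v \<in> cHom C Y X" "cComp C Y X Y u v = cId C Y"
    using u unfolding is_iso_def by blast
  have uh: "u \<in> cHom C X Y" using iso_hom[OF u] .
  have "cComp C Y Y Z f (cComp C Y X Y u v) = cComp C Y X Z (cComp C X Y Z f u) v"
    using kc_assoc[OF KC Y X Y Z v(1) uh f] by simp
  also have "\<dots> = cComp C Y Y Z g (cComp C Y X Y u v)"
    using eq kc_assoc[OF KC Y X Y Z v(1) uh g] by simp
  finally show ?thesis using v(2) kc_idr[OF KC Y Z f] kc_idr[OF KC Y Z g] by simp
qed

lemma id_iso: "X \<in> cOb C \<Longrightarrow> is_iso C X X (cId C X)"
  unfolding is_iso_def using kc_id[OF KC] kc_idl[OF KC] by metis

lemma iso_comp: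
  assumes X: "X \<in> cOb C" and Y: "Y \<in> cOb C" and Z: "Z \<in> cOb C"
    and u: "is_iso C X Y u" and w: "is_iso C Y Z w"
  shows "is_iso C X Z (cComp C X Y Z w u)"
proof -
  obtain u' where u': "is_iso C Y X u'" "cComp C X Y X u' u = cId C X" "cComp C Y X Y u u' = cId C Y"
    using iso_inv[OF u] .
  obtain w' where w': "is_iso C Z Y w'" "cComp C Y Z Y w' w = cId C Y" "cComp C Z Y Z w w' = cId C Z"
    using iso_inv[OF w] .
  have uh: "u \<in> cHom C X Y" and wh: "w \<in> cHom C Y Z"
    and u'h: "u' \<in> cHom C Y X" and w'h: "w' \<in> cHom C Z Y"
    using iso_hom[OF u] iso_hom[OF w] iso_hom[OF u'(1)] iso_hom[OF w'(1)] by auto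
  have "cComp C X Z X (cComp C Z Y X u' w') (cComp C X Y Z w u)
      = cComp C X Y X u' (cComp C X Z Y w' (cComp C X Y Z w u))"
    using kc_assoc[OF KC X Z Y X kc_comp[OF KC X Y Z uh wh] w'h u'h] by simp
  also have "\<dots> = cComp C X Y X u' (cComp C X Y Y (cComp C Y Z Y w' w) u)"
    using kc_assoc[OF KC X Y Z Y uh wh w'h] by simp
  also have "\<dots> = cId C X" using w'(2) kc_idl[OF KC X Y uh] u'(2) by simp
  finally have left: "cComp C X Z X (cComp C Z Y X u' w') (cComp C X Y Z w u) = cId C X" .
  have "cComp C Z X Z (cComp C X Y Z w u) (cComp C Z Y X u' w')
      = cComp C Z Y Z w (cComp C Z X Y u (cComp C Z Y X u' w'))"
    using kc_assoc[OF KC Z X Y Z kc_comp[OF KC Z Y X w'h u'h] uh wh] by simp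
  also have "\<dots> = cComp C Z Y Z w (cComp C Z Y Y (cComp C Y X Y u u') w')"
    using kc_assoc[OF KC Z Y X Y w'h u'h uh] by simp
  also have "\<dots> = cId C Z" using u'(3) kc_idl[OF KC Z Y w'h] w'(3) by simp
  finally have right: "cComp C Z X Z (cComp C X Y Z w u) (cComp C Z Y X u' w') = cId C Z" .
  show ?thesis unfolding is_iso_def
    using kc_comp[OF KC X Y Z uh wh] kc_comp[OF KC Z Y X w'h u'h] left right by blast
qed

end

section \<open>Equivalences are the fully faithful, essentially surjective functors\<close>

definition faithful :: "('o, 'm, 'k::comm_ring_1) lcat \<Rightarrow> ('o, 'm, 'p, 'n) lfun \<Rightarrow> bool" where
  "faithful C F \<longleftrightarrow> (\<forall>X\<in>cOb C. \<forall>Y\<in>cOb C. \<forall>f\<in>cHom C X Y. \<forall>g\<in>cHom C X Y.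
      fmor F X Y f = fmor F X Y g \<longrightarrow> f = g)"

definition full :: "('o, 'm, 'k::comm_ring_1) lcat \<Rightarrow> ('p, 'n, 'k) lcat \<Rightarrow> ('o, 'm, 'p, 'n) lfun \<Rightarrow> bool" where
  "full C D F \<longleftrightarrow> (\<forall>X\<in>cOb C. \<forall>Y\<in>cOb C. \<forall>h\<in>cHom D (fob F X) (fob F Y).
      \<exists>f\<in>cHom C X Y. fmor F X Y f = h)"

definition esssurj :: "('o, 'm, 'k::comm_ring_1) lcat \<Rightarrow> ('p, 'n, 'k) lcat \<Rightarrow> ('o, 'm, 'p, 'n) lfun \<Rightarrow> bool" where
  "esssurj C D F \<longleftrightarrow> (\<forall>Y\<in>cOb D. \<exists>X\<in>cOb C. \<exists>u. is_iso D Y (fob F X) u)"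

lemma nat_iso_parts:
  assumes "nat_iso C D F G \<eta>"
  shows "klin_functor C D F" "klin_functor C D G"
    "X \<in> cOb C \<Longrightarrow> is_iso D (fob F X) (fob G X) (\<eta> X)"
    "X \<in> cOb C \<Longrightarrow> Y \<in> cOb C \<Longrightarrow> f \<in> cHom C X Y \<Longrightarrow>
       cComp D (fob F X) (fob G X) (fob G Y) (fmor G X Y f) (\<eta> X)
     = cComp D (fob F X) (fob F Y) (fob G Y) (\<eta> Y) (fmor F X Y f)"
  using assms unfolding nat_iso_def by blast+

text \<open>A functor admitting a natural isomorphism from the identity to GF is faithful:
  naturality expresses f through GF(f) composed with an isomorphism.\<close>

lemma unit_faithful:
  assumes KF: "klin_functor C D F" and KG: "klin_functor D C G"
    and unit: "nat_iso C C fid (fun_comp G F) \<eta>"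
  shows "faithful C F"
  unfolding faithful_def
proof (intro ballI impI)
  fix X Y f g assume X: "X \<in> cOb C" and Y: "Y \<in> cOb C"
    and f: "f \<in> cHom C X Y" and g: "g \<in> cHom C X Y" and eq: "fmor F X Y f = fmor F X Y g"
  have "cComp C X Y (fob G (fob F Y)) (\<eta> Y) f = cComp C X Y (fob G (fob F Y)) (\<eta> Y) g"
    using nat_iso_parts(4)[OF unit X Y f] nat_iso_parts(4)[OF unit X Y g] eq by simp
  then show "f = g"
    using iso_cancel_left[OF kf_C[OF KF] X Y _ _ f g] kf_ob[OF KG kf_ob[OF KF Y]]
      nat_iso_parts(3)[OF unit Y] by simp
qed

lemma counit_faithful:
  assumes KF: "klin_functor C D F" and KG: "klin_functor D C G"
    and counit: "nat_iso D D (fun_comp F G) fid \<epsilon>"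
  shows "faithful D G"
  unfolding faithful_def
proof (intro ballI impI)
  fix X Y f g assume X: "X \<in> cOb D" and Y: "Y \<in> cOb D"
    and f: "f \<in> cHom D X Y" and g: "g \<in> cHom D X Y" and eq: "fmor G X Y f = fmor G X Y g"
  have "cComp D (fob F (fob G X)) X Y f (\<epsilon> X) = cComp D (fob F (fob G X)) X Y g (\<epsilon> X)"
    using nat_iso_parts(4)[OF counit X Y f] nat_iso_parts(4)[OF counit X Y g] eq by simp
  then show "f = g"
    using iso_cancel_right[OF kf_D[OF KF] _ X Y _ f g] kf_ob[OF KF kf_ob[OF KG X]]
      nat_iso_parts(3)[OF counit X] by simp
qed

text \<open>Fullness: a preimage of h is obtained by transporting G(h) along the unit; it is
  a preimage because G is faithful.\<close>

lemma unit_counit_full: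
  assumes KF: "klin_functor C D F" and KG: "klin_functor D C G"
    and unit: "nat_iso C C fid (fun_comp G F) \<eta>" and counit: "nat_iso D D (fun_comp F G) fid \<epsilon>"
  shows "full C D F"
  unfolding full_def
proof (intro ballI)
  fix X Y h assume X: "X \<in> cOb C" and Y: "Y \<in> cOb C" and h: "h \<in> cHom D (fob F X) (fob F Y)"
  have KC: "klin_cat C" using kf_C[OF KF] .
  define GX where "GX = fob G (fob F X)"
  define GY where "GY = fob G (fob F Y)"
  have GXo: "GX \<in> cOb C" and GYo: "GY \<in> cOb C"
    unfolding GX_def GY_def using kf_ob[OF KG] kf_ob[OF KF] X Y by auto
  have etaX: "is_iso C X GX (\<eta> X)" using nat_iso_parts(3)[OF unit X] unfolding GX_def by simp
  have etaY: "is_iso C Y GY (\<eta> Y)" using nat_iso_parts(3)[OF unit Y] unfolding GY_def by simp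
  obtain w where w: "is_iso C GY Y w" "cComp C GY Y GY (\<eta> Y) w = cId C GY"
    using iso_inv[OF etaY] by blast
  have wh: "w \<in> cHom C GY Y" using iso_hom[OF w(1)] .
  let ?G = "fmor G (fob F X) (fob F Y)"
  have Gh: "?G h \<in> cHom C GX GY"
    using kf_hom[OF KG kf_ob[OF KF X] kf_ob[OF KF Y] h] unfolding GX_def GY_def .
  have Gh_eta: "cComp C X GX GY (?G h) (\<eta> X) \<in> cHom C X GY"
    by (rule kc_comp[OF KC X GXo GYo iso_hom[OF etaX] Gh])
  define f where "f = cComp C X GY Y w (cComp C X GX GY (?G h) (\<eta> X))"
  have fh: "f \<in> cHom C X Y" unfolding f_def by (rule kc_comp[OF KC X GYo Y Gh_eta wh])
  have "cComp C X GX GY (?G (fmor F X Y f)) (\<eta> X) = cComp C X Y GY (\<eta> Y) f"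
    using nat_iso_parts(4)[OF unit X Y fh] unfolding GX_def GY_def by simp
  also have "\<dots> = cComp C X GY GY (cComp C GY Y GY (\<eta> Y) w) (cComp C X GX GY (?G h) (\<eta> X))"
    unfolding f_def by (rule kc_assoc[OF KC X GYo Y GYo Gh_eta wh iso_hom[OF etaY]])
  also have "\<dots> = cComp C X GX GY (?G h) (\<eta> X)"
    using w(2) kc_idl[OF KC X GYo Gh_eta] by simp
  finally have "?G (fmor F X Y f) = ?G h"
    using iso_cancel_right[OF KC X GXo GYo etaX _ Gh]
      kf_hom[OF KG kf_ob[OF KF X] kf_ob[OF KF Y] kf_hom[OF KF X Y fh]]
    unfolding GX_def GY_def by blast
  then have "fmor F X Y f = h"
    using counit_faithful[OF KF KG counit] kf_hom[OF KF X Y fh] h kf_ob[OF KF X] kf_ob[OF KF Y]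
    unfolding faithful_def by blast
  then show "\<exists>f\<in>cHom C X Y. fmor F X Y f = h" using fh by blast
qed

lemma equivalence_imp_fully_faithful_esssurj:
  assumes E: "klin_equivalence C D F"
  shows "faithful C F" "full C D F" "esssurj C D F"
proof -
  have KF: "klin_functor C D F" using E unfolding klin_equivalence_def by blast
  obtain G \<eta> \<epsilon> where KG: "klin_functor D C G" and unit: "nat_iso C C fid (fun_comp G F) \<eta>"
    and counit: "nat_iso D D (fun_comp F G) fid \<epsilon>"
    using E unfolding klin_equivalence_def by blast
  show "faithful C F" by (rule unit_faithful[OF KF KG unit])
  show "full C D F" by (rule unit_counit_full[OF KF KG unit counit])
  show "esssurj C D F"
    unfolding esssurj_def
  proof
    fix Y assume Y: "Y \<in> cOb D"
    obtain v where "is_iso D Y (fob F (fob G Y)) v"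
      using iso_inv[OF nat_iso_parts(3)[OF counit Y]] by auto
    then show "\<exists>X\<in>cOb C. \<exists>u. is_iso D Y (fob F X) u" using kf_ob[OF KG Y] by blast
  qed
qed

text \<open>A quasi-inverse G chooses for every object Y of D an object G Y (rep_ob Y) with an isomorphism
  u_Y = rep_iso Y : Y \<rightarrow> F (G Y), and sends c : Y \<rightarrow> Y' to the unique preimage under F of the
  conjugate u_Y' \<circ> c \<circ> u_Y\<inverse>.\<close>

locale fully_faithful_esssurj =
  fixes C :: "('o, 'm, 'k::comm_ring_1) lcat" and D :: "('p, 'n, 'k) lcat"
    and F :: "('o, 'm, 'p, 'n) lfun"
  assumes KF: "klin_functor C D F" and faithful: "faithful C F" and full: "full C D F"
    and esssurj: "esssurj C D F"
begin

lemma KC: "klin_cat C" and KD: "klin_cat D"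
  using kf_C[OF KF] kf_D[OF KF] .

lemma FO: "X \<in> cOb C \<Longrightarrow> fob F X \<in> cOb D"
  by (rule kf_ob[OF KF])

definition rep_ob :: "'p \<Rightarrow> 'o" where
  "rep_ob Y = (SOME X. X \<in> cOb C \<and> (\<exists>u. is_iso D Y (fob F X) u))"

definition rep_iso :: "'p \<Rightarrow> 'n" where
  "rep_iso Y = (SOME u. is_iso D Y (fob F (rep_ob Y)) u)"

definition rep_iso_inv :: "'p \<Rightarrow> 'n" where
  "rep_iso_inv Y = (SOME v. v \<in> cHom D (fob F (rep_ob Y)) Y \<and> cComp D Y (fob F (rep_ob Y)) Y v (rep_iso Y) = cId D Y
    \<and> cComp D (fob F (rep_ob Y)) Y (fob F (rep_ob Y)) (rep_iso Y) v = cId D (fob F (rep_ob Y)))"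

lemma rep_ob: "Y \<in> cOb D \<Longrightarrow> rep_ob Y \<in> cOb C \<and> (\<exists>u. is_iso D Y (fob F (rep_ob Y)) u)"
  unfolding rep_ob_def by (rule someI_ex) (use esssurj[unfolded esssurj_def] in blast)

lemma rep_ob_in: "Y \<in> cOb D \<Longrightarrow> rep_ob Y \<in> cOb C"
  using rep_ob by blast

lemma F_rep_ob_in: "Y \<in> cOb D \<Longrightarrow> fob F (rep_ob Y) \<in> cOb D"
  using rep_ob FO by blast

lemma rep_iso: "Y \<in> cOb D \<Longrightarrow> is_iso D Y (fob F (rep_ob Y)) (rep_iso Y)"
  unfolding rep_iso_def by (rule someI_ex) (use rep_ob in blast)

lemma rep_iso_hom: "Y \<in> cOb D \<Longrightarrow> rep_iso Y \<in> cHom D Y (fob F (rep_ob Y))"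
  using iso_hom[OF rep_iso] .

lemma rep_iso_inv:
  assumes Y: "Y \<in> cOb D"
  shows "rep_iso_inv Y \<in> cHom D (fob F (rep_ob Y)) Y" "cComp D Y (fob F (rep_ob Y)) Y (rep_iso_inv Y) (rep_iso Y) = cId D Y"
    "cComp D (fob F (rep_ob Y)) Y (fob F (rep_ob Y)) (rep_iso Y) (rep_iso_inv Y) = cId D (fob F (rep_ob Y))"
proof -
  have "\<exists>v. v \<in> cHom D (fob F (rep_ob Y)) Y \<and> cComp D Y (fob F (rep_ob Y)) Y v (rep_iso Y) = cId D Y
    \<and> cComp D (fob F (rep_ob Y)) Y (fob F (rep_ob Y)) (rep_iso Y) v = cId D (fob F (rep_ob Y))"
    using rep_iso[OF Y] unfolding is_iso_def by blast
  then have "rep_iso_inv Y \<in> cHom D (fob F (rep_ob Y)) Y \<and> cComp D Y (fob F (rep_ob Y)) Y (rep_iso_inv Y) (rep_iso Y) = cId D Y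
    \<and> cComp D (fob F (rep_ob Y)) Y (fob F (rep_ob Y)) (rep_iso Y) (rep_iso_inv Y) = cId D (fob F (rep_ob Y))"
    unfolding rep_iso_inv_def by (rule someI_ex)
  then show "rep_iso_inv Y \<in> cHom D (fob F (rep_ob Y)) Y" "cComp D Y (fob F (rep_ob Y)) Y (rep_iso_inv Y) (rep_iso Y) = cId D Y"
    "cComp D (fob F (rep_ob Y)) Y (fob F (rep_ob Y)) (rep_iso Y) (rep_iso_inv Y) = cId D (fob F (rep_ob Y))"
    by simp_all
qed

definition pre_image :: "'o \<Rightarrow> 'o \<Rightarrow> 'n \<Rightarrow> 'm" where
  "pre_image X X' h = (THE f. f \<in> cHom C X X' \<and> fmor F X X' f = h)"

lemma pre_image:
  assumes X: "X \<in> cOb C" and X': "X' \<in> cOb C" and h: "h \<in> cHom D (fob F X) (fob F X')"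
  shows "pre_image X X' h \<in> cHom C X X'" "fmor F X X' (pre_image X X' h) = h"
proof -
  have "\<exists>!f. f \<in> cHom C X X' \<and> fmor F X X' f = h"
    using full faithful X X' h unfolding full_def faithful_def by metis
  from theI'[OF this] show "pre_image X X' h \<in> cHom C X X'" "fmor F X X' (pre_image X X' h) = h"
    unfolding pre_image_def by simp_all
qed

lemma pre_image_unique:
  "X \<in> cOb C \<Longrightarrow> X' \<in> cOb C \<Longrightarrow> f \<in> cHom C X X' \<Longrightarrow> fmor F X X' f = h \<Longrightarrow> pre_image X X' h = f"
  using pre_image[of X X' h] faithful kf_hom[OF KF] unfolding faithful_def by metis

lemma faithful_eq: "X \<in> cOb C \<Longrightarrow> Y \<in> cOb C \<Longrightarrow> f \<in> cHom C X Y \<Longrightarrow> g \<in> cHom C X Y \<Longrightarrow>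
    fmor F X Y f = fmor F X Y g \<Longrightarrow> f = g"
  using faithful unfolding faithful_def by blast

definition conjugate :: "'p \<Rightarrow> 'p \<Rightarrow> 'n \<Rightarrow> 'n" where
  "conjugate Y Y' c = cComp D (fob F (rep_ob Y)) Y' (fob F (rep_ob Y')) (rep_iso Y') (cComp D (fob F (rep_ob Y)) Y Y' c (rep_iso_inv Y))"

lemma conj_hom: "Y \<in> cOb D \<Longrightarrow> Y' \<in> cOb D \<Longrightarrow> c \<in> cHom D Y Y' \<Longrightarrow>
    conjugate Y Y' c \<in> cHom D (fob F (rep_ob Y)) (fob F (rep_ob Y'))"
  unfolding conjugate_def by (intro kc_comp[OF KD] F_rep_ob_in rep_iso_hom rep_iso_inv(1)) auto

lemma kc_assoc_r: "W \<in> cOb D \<Longrightarrow> X \<in> cOb D \<Longrightarrow> Y \<in> cOb D \<Longrightarrow> Z \<in> cOb D \<Longrightarrow>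
   f \<in> cHom D W X \<Longrightarrow> g \<in> cHom D X Y \<Longrightarrow> h \<in> cHom D Y Z \<Longrightarrow>
   cComp D W X Z (cComp D X Y Z h g) f = cComp D W Y Z h (cComp D W X Y g f)"
  using kc_assoc[OF KD] by metis

lemma vu_cancel: "Y \<in> cOb D \<Longrightarrow> A \<in> cOb D \<Longrightarrow> x \<in> cHom D A Y \<Longrightarrow>
   cComp D A (fob F (rep_ob Y)) Y (rep_iso_inv Y) (cComp D A Y (fob F (rep_ob Y)) (rep_iso Y) x) = x"
  using kc_assoc[OF KD _ _ F_rep_ob_in _ _ rep_iso_hom rep_iso_inv(1)] rep_iso_inv(2) kc_idl[OF KD] by metis

lemma uv_cancel: "Y \<in> cOb D \<Longrightarrow> A \<in> cOb D \<Longrightarrow> x \<in> cHom D A (fob F (rep_ob Y)) \<Longrightarrow>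
   cComp D A Y (fob F (rep_ob Y)) (rep_iso Y) (cComp D A (fob F (rep_ob Y)) Y (rep_iso_inv Y) x) = x"
  using kc_assoc[OF KD _ F_rep_ob_in _ F_rep_ob_in _ rep_iso_inv(1) rep_iso_hom] rep_iso_inv(3) kc_idl[OF KD] F_rep_ob_in by metis

lemmas conj_simps = kc_assoc_r kc_comp[OF KD] vu_cancel uv_cancel F_rep_ob_in rep_iso_hom rep_iso_inv(1)
  kc_idl[OF KD] kc_idr[OF KD] rep_iso_inv(2) rep_iso_inv(3)

lemma conj_id: "Y \<in> cOb D \<Longrightarrow> conjugate Y Y (cId D Y) = cId D (fob F (rep_ob Y))"
  unfolding conjugate_def by (simp add: conj_simps)

lemma conj_comp: "Y \<in> cOb D \<Longrightarrow> Y' \<in> cOb D \<Longrightarrow> Y'' \<in> cOb D \<Longrightarrow> c \<in> cHom D Y Y' \<Longrightarrow> c' \<in> cHom D Y' Y'' \<Longrightarrow>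
   conjugate Y Y'' (cComp D Y Y' Y'' c' c)
     = cComp D (fob F (rep_ob Y)) (fob F (rep_ob Y')) (fob F (rep_ob Y'')) (conjugate Y' Y'' c') (conjugate Y Y' c)"
  unfolding conjugate_def by (simp add: conj_simps)

lemma conj_add: "Y \<in> cOb D \<Longrightarrow> Y' \<in> cOb D \<Longrightarrow> c \<in> cHom D Y Y' \<Longrightarrow> d \<in> cHom D Y Y' \<Longrightarrow>
   conjugate Y Y' (cAdd D Y Y' c d) = cAdd D (fob F (rep_ob Y)) (fob F (rep_ob Y')) (conjugate Y Y' c) (conjugate Y Y' d)"
  unfolding conjugate_def
  by (simp add: kc_bilin(1,2)[OF KD] rep_iso_inv(1) rep_iso_hom F_rep_ob_in kc_comp[OF KD])

lemma conj_smul: "Y \<in> cOb D \<Longrightarrow> Y' \<in> cOb D \<Longrightarrow> c \<in> cHom D Y Y' \<Longrightarrow>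
   conjugate Y Y' (cSmul D Y Y' a c) = cSmul D (fob F (rep_ob Y)) (fob F (rep_ob Y')) a (conjugate Y Y' c)"
  unfolding conjugate_def
  by (simp add: kc_bilin(3,4)[OF KD] rep_iso_inv(1) rep_iso_hom F_rep_ob_in kc_comp[OF KD])

definition quasi_inverse :: "('p, 'n, 'o, 'm) lfun" where
  "quasi_inverse = \<lparr>fob = rep_ob, fmor = (\<lambda>Y Y' c. pre_image (rep_ob Y) (rep_ob Y') (conjugate Y Y' c))\<rparr>"

lemma quasi_inverse_simps[simp]: "fob quasi_inverse Y = rep_ob Y" "fmor quasi_inverse Y Y' c = pre_image (rep_ob Y) (rep_ob Y') (conjugate Y Y' c)"
  by (simp_all add: quasi_inverse_def)

lemma quasi_inverse_hom: "Y \<in> cOb D \<Longrightarrow> Y' \<in> cOb D \<Longrightarrow> c \<in> cHom D Y Y' \<Longrightarrow>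
    pre_image (rep_ob Y) (rep_ob Y') (conjugate Y Y' c) \<in> cHom C (rep_ob Y) (rep_ob Y')"
  using pre_image(1)[OF rep_ob_in rep_ob_in conj_hom] .

lemma F_quasi_inverse: "Y \<in> cOb D \<Longrightarrow> Y' \<in> cOb D \<Longrightarrow> c \<in> cHom D Y Y' \<Longrightarrow>
    fmor F (rep_ob Y) (rep_ob Y') (pre_image (rep_ob Y) (rep_ob Y') (conjugate Y Y' c)) = conjugate Y Y' c"
  using pre_image(2)[OF rep_ob_in rep_ob_in conj_hom] .

text \<open>Each functor law for the quasi-inverse follows from the corresponding law for
  conjugation, by uniqueness of preimages.\<close>

lemma quasi_inverse_id: "Y \<in> cOb D \<Longrightarrow> pre_image (rep_ob Y) (rep_ob Y) (conjugate Y Y (cId D Y)) = cId C (rep_ob Y)"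
  by (rule pre_image_unique[OF rep_ob_in rep_ob_in kc_id[OF KC rep_ob_in]]) (simp_all add: conj_id kf_id[OF KF] rep_ob_in)

lemma quasi_inverse_comp:
  assumes Y: "Y \<in> cOb D" and Y': "Y' \<in> cOb D" and Y'': "Y'' \<in> cOb D"
    and c: "c \<in> cHom D Y Y'" and c': "c' \<in> cHom D Y' Y''"
  shows "pre_image (rep_ob Y) (rep_ob Y'') (conjugate Y Y'' (cComp D Y Y' Y'' c' c))
      = cComp C (rep_ob Y) (rep_ob Y') (rep_ob Y'') (pre_image (rep_ob Y') (rep_ob Y'') (conjugate Y' Y'' c'))
          (pre_image (rep_ob Y) (rep_ob Y') (conjugate Y Y' c))"
  by (rule pre_image_unique[OF rep_ob_in[OF Y] rep_ob_in[OF Y''] kc_comp[OF KC rep_ob_in[OF Y] rep_ob_in[OF Y'] rep_ob_in[OF Y'']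
        quasi_inverse_hom[OF Y Y' c] quasi_inverse_hom[OF Y' Y'' c']]])
    (simp add: kf_comp[OF KF] rep_ob_in Y Y' Y'' quasi_inverse_hom c c' F_quasi_inverse conj_comp)

lemma quasi_inverse_add:
  assumes Y: "Y \<in> cOb D" and Y': "Y' \<in> cOb D" and c: "c \<in> cHom D Y Y'" and c': "c' \<in> cHom D Y Y'"
  shows "pre_image (rep_ob Y) (rep_ob Y') (conjugate Y Y' (cAdd D Y Y' c c'))
      = cAdd C (rep_ob Y) (rep_ob Y') (pre_image (rep_ob Y) (rep_ob Y') (conjugate Y Y' c)) (pre_image (rep_ob Y) (rep_ob Y') (conjugate Y Y' c'))"
  by (rule pre_image_unique[OF rep_ob_in[OF Y] rep_ob_in[OF Y']
        hm_addc[OF kc_hm[OF KC rep_ob_in[OF Y] rep_ob_in[OF Y']] quasi_inverse_hom[OF Y Y' c] quasi_inverse_hom[OF Y Y' c']]])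
    (simp add: kf_add[OF KF] rep_ob_in Y Y' quasi_inverse_hom c c' F_quasi_inverse conj_add)

lemma quasi_inverse_smul:
  assumes Y: "Y \<in> cOb D" and Y': "Y' \<in> cOb D" and c: "c \<in> cHom D Y Y'"
  shows "pre_image (rep_ob Y) (rep_ob Y') (conjugate Y Y' (cSmul D Y Y' a c))
      = cSmul C (rep_ob Y) (rep_ob Y') a (pre_image (rep_ob Y) (rep_ob Y') (conjugate Y Y' c))"
  by (rule pre_image_unique[OF rep_ob_in[OF Y] rep_ob_in[OF Y']
        hm_smulc[OF kc_hm[OF KC rep_ob_in[OF Y] rep_ob_in[OF Y']] quasi_inverse_hom[OF Y Y' c]]])
    (simp add: kf_smul[OF KF] rep_ob_in Y Y' quasi_inverse_hom c F_quasi_inverse conj_smul)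

lemma quasi_inverse_functor: "klin_functor D C quasi_inverse"
  unfolding klin_functor_def quasi_inverse_simps
  using KD KC rep_ob_in quasi_inverse_hom quasi_inverse_id quasi_inverse_comp quasi_inverse_add quasi_inverse_smul by simp

text \<open>The unit X \<rightarrow> G(F X) is the preimage of u_{F X}; it is invertible because its
  image under the faithful functor F is.\<close>

definition unit_map :: "'o \<Rightarrow> 'm" where
  "unit_map X = pre_image X (rep_ob (fob F X)) (rep_iso (fob F X))"

definition unit_inv :: "'o \<Rightarrow> 'm" where
  "unit_inv X = pre_image (rep_ob (fob F X)) X (rep_iso_inv (fob F X))"

lemma unit_map:
  assumes X: "X \<in> cOb C"
  shows "unit_map X \<in> cHom C X (rep_ob (fob F X))" "fmor F X (rep_ob (fob F X)) (unit_map X) = rep_iso (fob F X)"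
    "unit_inv X \<in> cHom C (rep_ob (fob F X)) X" "fmor F (rep_ob (fob F X)) X (unit_inv X) = rep_iso_inv (fob F X)"
  unfolding unit_map_def unit_inv_def
  using pre_image[OF X rep_ob_in[OF FO[OF X]]] pre_image[OF rep_ob_in[OF FO[OF X]] X] rep_iso_hom[OF FO[OF X]] rep_iso_inv(1)[OF FO[OF X]]
  by auto

lemma unit_iso:
  assumes X: "X \<in> cOb C"
  shows "is_iso C X (rep_ob (fob F X)) (unit_map X)"
proof -
  have gX: "rep_ob (fob F X) \<in> cOb C" using rep_ob_in[OF FO[OF X]] .
  have "cComp C X (rep_ob (fob F X)) X (unit_inv X) (unit_map X) = cId C X"
    by (rule faithful_eq[OF X X kc_comp[OF KC X gX X unit_map(1)[OF X] unit_map(3)[OF X]] kc_id[OF KC X]])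
      (simp add: kf_comp[OF KF X gX X unit_map(1)[OF X] unit_map(3)[OF X]] unit_map[OF X] kf_id[OF KF X]
        rep_iso_inv(2)[OF FO[OF X]])
  moreover have "cComp C (rep_ob (fob F X)) X (rep_ob (fob F X)) (unit_map X) (unit_inv X) = cId C (rep_ob (fob F X))"
    by (rule faithful_eq[OF gX gX kc_comp[OF KC gX X gX unit_map(3)[OF X] unit_map(1)[OF X]] kc_id[OF KC gX]])
      (simp add: kf_comp[OF KF gX X gX unit_map(3)[OF X] unit_map(1)[OF X]] unit_map[OF X] kf_id[OF KF gX]
        rep_iso_inv(3)[OF FO[OF X]])
  ultimately show ?thesis unfolding is_iso_def using unit_map(1,3)[OF X] by blast
qed

lemma unit_natural:
  assumes X: "X \<in> cOb C" and Y: "Y \<in> cOb C" and f: "f \<in> cHom C X Y"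
  shows "cComp C X (rep_ob (fob F X)) (rep_ob (fob F Y)) (fmor quasi_inverse (fob F X) (fob F Y) (fmor F X Y f)) (unit_map X)
       = cComp C X Y (rep_ob (fob F Y)) (unit_map Y) f"
proof -
  have gX: "rep_ob (fob F X) \<in> cOb C" and gY: "rep_ob (fob F Y) \<in> cOb C" using rep_ob_in FO X Y by auto
  have Ff: "fmor F X Y f \<in> cHom D (fob F X) (fob F Y)" by (rule kf_hom[OF KF X Y f])
  note Gf = quasi_inverse_hom[OF FO[OF X] FO[OF Y] Ff]
  show ?thesis
    unfolding quasi_inverse_simps
    by (rule faithful_eq[OF X gY kc_comp[OF KC X gX gY unit_map(1)[OF X] Gf] kc_comp[OF KC X Y gY f unit_map(1)[OF Y]]])
      (simp add: kf_comp[OF KF X gX gY unit_map(1)[OF X] Gf] kf_comp[OF KF X Y gY f unit_map(1)[OF Y]]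
        unit_map[OF X] unit_map[OF Y] F_quasi_inverse[OF FO[OF X] FO[OF Y] Ff],
        simp add: conjugate_def conj_simps FO X Y Ff)
qed

theorem equivalence: "klin_equivalence C D F"
  unfolding klin_equivalence_def
proof (intro conjI exI)
  show "klin_functor C D F" by (rule KF)
  show "klin_functor D C quasi_inverse" by (rule quasi_inverse_functor)
  show "nat_iso C C fid (fun_comp quasi_inverse F) unit_map"
    unfolding nat_iso_def
    using kf_fid[OF KC] kf_compose[OF KF quasi_inverse_functor] unit_iso unit_natural by simp
  show "nat_iso D D (fun_comp F quasi_inverse) fid rep_iso_inv"
    unfolding nat_iso_def
  proof (intro conjI ballI)
    show "klin_functor D D fid" by (rule kf_fid[OF KD])
    show "klin_functor D D (fun_comp F quasi_inverse)" by (rule kf_compose[OF quasi_inverse_functor KF])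
    fix Y assume Y: "Y \<in> cOb D"
    show "is_iso D (fob (fun_comp F quasi_inverse) Y) (fob fid Y) (rep_iso_inv Y)"
      unfolding is_iso_def using rep_iso_inv[OF Y] rep_iso_hom[OF Y] by auto
    fix Y' c assume Y': "Y' \<in> cOb D" and c: "c \<in> cHom D Y Y'"
    show "cComp D (fob (fun_comp F quasi_inverse) Y) (fob fid Y) (fob fid Y') (fmor fid Y Y' c) (rep_iso_inv Y) =
        cComp D (fob (fun_comp F quasi_inverse) Y) (fob (fun_comp F quasi_inverse) Y') (fob fid Y') (rep_iso_inv Y')
          (fmor (fun_comp F quasi_inverse) Y Y' c)"
      using F_quasi_inverse[OF Y Y' c] by (simp add: conjugate_def conj_simps Y Y' c)
  qed
qed

end

section \<open>Iterates of a fully faithful endofunctor\<close>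

lemma Spow_0[simp]: "Spow S 0 X = X"
  by (simp add: Spow_def)

lemma Spow_Suc: "Spow S (Suc k) X = fob S (Spow S k X)"
  by (simp add: Spow_def)

lemma Spow_one[simp]: "Spow S 1 X = fob S X" "Spow S (Suc 0) X = fob S X"
  by (simp_all add: Spow_def)

lemma Spow_add[simp]: "Spow S k (Spow S n X) = Spow S (k + n) X"
  by (simp add: Spow_def funpow_add)

lemma Spow_fob[simp]: "Spow S k (fob S X) = Spow S (Suc k) X"
  by (simp add: Spow_def funpow_swap1)

lemma Smpow_Smpow:
  "Smpow S k (Spow S k' A) (Spow S k' B) (Smpow S k' A B f) = Smpow S (k + k') A B f"
proof (induction k)
  case 0 then show ?case by simp
next
  case (Suc k) then show ?case by (simp del: Spow_add add: Spow_add[symmetric])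
qed

lemma Smpow_split: "Smpow S (a + b) (Spow S n X) (Spow S p Y) f
   = Smpow S a (Spow S (b + n) X) (Spow S (b + p) Y) (Smpow S b (Spow S n X) (Spow S p Y) f)"
  using Smpow_Smpow[of S a b "Spow S n X" "Spow S p Y" f] by simp

lemma Smpow_fob: "Smpow S k (fob S X) (fob S Y) (fmor S X Y f) = Smpow S (Suc k) X Y f"
  using Smpow_Smpow[of S k 1 X Y f] by (simp add: Spow_Suc)

text \<open>Throughout the construction S is a fully faithful k-linear endofunctor; essential
  surjectivity is only needed for the essential surjectivity of H.\<close>

locale ff_endo =
  fixes C :: "('o, 'm, 'k::comm_ring_1) lcat" and S :: "('o, 'm, 'o, 'm) lfun"
  assumes KF: "klin_functor C C S" and faithful: "faithful C S" and full: "full C C S"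
begin

lemma KC: "klin_cat C"
  using kf_C[OF KF] .

lemma spow_ob: "X \<in> cOb C \<Longrightarrow> Spow S k X \<in> cOb C"
  by (induction k) (auto simp: Spow_Suc kf_ob[OF KF])

lemma Smpow_hom: "A \<in> cOb C \<Longrightarrow> B \<in> cOb C \<Longrightarrow> f \<in> cHom C A B \<Longrightarrow>
   Smpow S k A B f \<in> cHom C (Spow S k A) (Spow S k B)"
  by (induction k) (auto simp: Spow_Suc intro!: kf_hom[OF KF] spow_ob)

lemma Smpow_comp: "A \<in> cOb C \<Longrightarrow> B \<in> cOb C \<Longrightarrow> Z \<in> cOb C \<Longrightarrow> f \<in> cHom C A B \<Longrightarrow> g \<in> cHom C B Z \<Longrightarrow>
   Smpow S k A Z (cComp C A B Z g f)
     = cComp C (Spow S k A) (Spow S k B) (Spow S k Z) (Smpow S k B Z g) (Smpow S k A B f)"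
  by (induction k) (auto simp: Spow_Suc kf_comp[OF KF] spow_ob Smpow_hom)

lemma Smpow_id: "A \<in> cOb C \<Longrightarrow> Smpow S k A A (cId C A) = cId C (Spow S k A)"
  by (induction k) (auto simp: Spow_Suc kf_id[OF KF] spow_ob)

lemma Smpow_add: "A \<in> cOb C \<Longrightarrow> B \<in> cOb C \<Longrightarrow> f \<in> cHom C A B \<Longrightarrow> g \<in> cHom C A B \<Longrightarrow>
   Smpow S k A B (cAdd C A B f g)
     = cAdd C (Spow S k A) (Spow S k B) (Smpow S k A B f) (Smpow S k A B g)"
  by (induction k) (auto simp: Spow_Suc kf_add[OF KF] spow_ob Smpow_hom)

lemma Smpow_smul: "A \<in> cOb C \<Longrightarrow> B \<in> cOb C \<Longrightarrow> f \<in> cHom C A B \<Longrightarrow>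
   Smpow S k A B (cSmul C A B a f) = cSmul C (Spow S k A) (Spow S k B) a (Smpow S k A B f)"
  by (induction k) (auto simp: Spow_Suc kf_smul[OF KF] spow_ob Smpow_hom)

lemma Smpow_zero: "A \<in> cOb C \<Longrightarrow> B \<in> cOb C \<Longrightarrow>
   Smpow S k A B (cZero C A B) = cZero C (Spow S k A) (Spow S k B)"
  by (induction k) (auto simp: Spow_Suc kf_zero[OF KF] spow_ob)

lemma Smpow_inj: "A \<in> cOb C \<Longrightarrow> B \<in> cOb C \<Longrightarrow> f \<in> cHom C A B \<Longrightarrow> g \<in> cHom C A B \<Longrightarrow>
   Smpow S k A B f = Smpow S k A B g \<Longrightarrow> f = g"
proof (induction k)
  case 0 then show ?case by simp
next
  case (Suc k)
  have "Smpow S k A B f = Smpow S k A B g"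
    using faithful Suc.prems Smpow_hom[of A B f k] Smpow_hom[of A B g k] spow_ob[of A k] spow_ob[of B k]
    unfolding faithful_def by simp
  then show ?case using Suc by blast
qed

lemma Smpow_surj: "A \<in> cOb C \<Longrightarrow> B \<in> cOb C \<Longrightarrow> h \<in> cHom C (Spow S k A) (Spow S k B) \<Longrightarrow>
   \<exists>f\<in>cHom C A B. Smpow S k A B f = h"
proof (induction k arbitrary: h)
  case 0 then show ?case by simp
next
  case (Suc k)
  obtain h' where h': "h' \<in> cHom C (Spow S k A) (Spow S k B)" "fmor S (Spow S k A) (Spow S k B) h' = h"
    using full Suc.prems spow_ob[of A k] spow_ob[of B k] unfolding full_def Spow_Suc by blast
  obtain f where "f \<in> cHom C A B" "Smpow S k A B f = h'" using Suc.IH[OF Suc.prems(1,2) h'(1)] by blast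
  then show ?case using h'(2) by auto
qed

lemma Smpow_iso:
  assumes A: "A \<in> cOb C" and B: "B \<in> cOb C" and u: "is_iso C A B u"
  shows "is_iso C (Spow S k A) (Spow S k B) (Smpow S k A B u)"
proof -
  obtain v where v: "is_iso C B A v" "cComp C A B A v u = cId C A" "cComp C B A B u v = cId C B"
    using iso_inv[OF u] .
  have uh: "u \<in> cHom C A B" and vh: "v \<in> cHom C B A" using iso_hom[OF u] iso_hom[OF v(1)] .
  have "cComp C (Spow S k A) (Spow S k B) (Spow S k A) (Smpow S k B A v) (Smpow S k A B u) = cId C (Spow S k A)"
    using Smpow_comp[OF A B A uh vh, symmetric] v(2) Smpow_id[OF A] by simp
  moreover have "cComp C (Spow S k B) (Spow S k A) (Spow S k B) (Smpow S k A B u) (Smpow S k B A v) = cId C (Spow S k B)"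
    using Smpow_comp[OF B A B vh uh, symmetric] v(3) Smpow_id[OF B] by simp
  ultimately show ?thesis
    unfolding is_iso_def using Smpow_hom[OF A B uh] Smpow_hom[OF B A vh] by blast
qed

end

section \<open>Representatives of morphisms of the orbit category\<close>

lemma reps_iff: "(n, p, f) \<in> orb_reps C S X Y r \<longleftrightarrow>
    int p - int n = r \<and> f \<in> cHom C (Spow S n X) (Spow S p Y)"
  by (simp add: orb_reps_def)

lemma rel_iff0: "((n, p, f), (n', p', f')) \<in> orb_rel C S X Y r \<longleftrightarrow>
   (n, p, f) \<in> orb_reps C S X Y r \<and> (n', p', f') \<in> orb_reps C S X Y r \<and>
   (\<exists>k k'. n + k = n' + k' \<and>
         Smpow S k (Spow S n X) (Spow S p Y) f = Smpow S k' (Spow S n' X) (Spow S p' Y) f')"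
  unfolding orb_rel_def by simp

text \<open>The identification of representatives is an equivalence relation (this holds for
  any endofunctor S); transitivity lifts both identifications to a common level.\<close>

lemma equiv_rel: "equiv (orb_reps C S X Y r) (orb_rel C S X Y r)"
proof (rule equivI)
  show "orb_rel C S X Y r \<subseteq> orb_reps C S X Y r \<times> orb_reps C S X Y r"
    unfolding orb_rel_def by auto
  show "refl_on (orb_reps C S X Y r) (orb_rel C S X Y r)"
    unfolding refl_on_def by (auto simp: rel_iff0 intro: exI[of _ 0])
  show "sym (orb_rel C S X Y r)"
    unfolding sym_def by (auto simp: rel_iff0) (metis)
  show "trans (orb_rel C S X Y r)"
  proof (rule transI)
    fix a b c assume ab: "(a, b) \<in> orb_rel C S X Y r" and bc: "(b, c) \<in> orb_rel C S X Y r"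
    obtain n p f where a: "a = (n, p, f)" by (cases a) auto
    obtain n' p' f' where b: "b = (n', p', f')" by (cases b) auto
    obtain n'' p'' f'' where c: "c = (n'', p'', f'')" by (cases c) auto
    from ab obtain k1 k1' where ra: "(n, p, f) \<in> orb_reps C S X Y r" "(n', p', f') \<in> orb_reps C S X Y r"
      and e1: "n + k1 = n' + k1'"
      "Smpow S k1 (Spow S n X) (Spow S p Y) f = Smpow S k1' (Spow S n' X) (Spow S p' Y) f'"
      unfolding a b rel_iff0 by blast
    from bc obtain k2 k2' where rc: "(n'', p'', f'') \<in> orb_reps C S X Y r"
      and e2: "n' + k2 = n'' + k2'"
      "Smpow S k2 (Spow S n' X) (Spow S p' Y) f' = Smpow S k2' (Spow S n'' X) (Spow S p'' Y) f''"
      unfolding b c rel_iff0 by blast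
    have p1: "k1 + p = k1' + p'" using ra e1(1) unfolding reps_iff by linarith
    have p2: "k2 + p' = k2' + p''" using ra rc e2(1) unfolding reps_iff by linarith
    have n1: "k1 + n = k1' + n'" and n2: "k2 + n' = k2' + n''" using e1(1) e2(1) by simp_all
    have "Smpow S (k2 + k1) (Spow S n X) (Spow S p Y) f
        = Smpow S k2 (Spow S (k1 + n) X) (Spow S (k1 + p) Y) (Smpow S k1 (Spow S n X) (Spow S p Y) f)"
      by (rule Smpow_split)
    also have "\<dots> = Smpow S (k2 + k1') (Spow S n' X) (Spow S p' Y) f'"
      using e1(2) n1 p1 Smpow_split[of S k2 k1' n' X p' Y f'] by simp
    also have "\<dots> = Smpow S k1' (Spow S (k2 + n') X) (Spow S (k2 + p') Y) (Smpow S k2 (Spow S n' X) (Spow S p' Y) f')"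
      using Smpow_split[of S k1' k2 n' X p' Y f'] by (simp add: add.commute)
    also have "\<dots> = Smpow S (k1' + k2') (Spow S n'' X) (Spow S p'' Y) f''"
      using e2(2) n2 p2 Smpow_split[of S k1' k2' n'' X p'' Y f''] by simp
    finally have "Smpow S (k1 + k2) (Spow S n X) (Spow S p Y) f
        = Smpow S (k1' + k2') (Spow S n'' X) (Spow S p'' Y) f''"
      by (simp add: add.commute)
    moreover have "n + (k1 + k2) = n'' + (k1' + k2')" using e1(1) e2(1) by simp
    ultimately show "(a, c) \<in> orb_rel C S X Y r" unfolding a c rel_iff0 using ra rc by blast
  qed
qed

text \<open>lv r m is the target level m + r of a representative of degree r starting at level m.\<close>

definition lv :: "int \<Rightarrow> nat \<Rightarrow> nat" where
  "lv r m = nat (int m + r)"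

lemma lv_simp: "0 \<le> int m + r \<Longrightarrow> int (lv r m) = int m + r"
  by (simp add: lv_def)

lemma lv0[simp]: "lv 0 m = m"
  by (simp add: lv_def)

lemma lv_shift: "0 \<le> int m + r \<Longrightarrow> m \<le> M \<Longrightarrow> M - m + lv r m = lv r M"
  unfolding lv_def by simp

lemma lv_lv: "0 \<le> int m + a \<Longrightarrow> c = a + b \<Longrightarrow> lv c m = lv b (lv a m)"
  unfolding lv_def by (simp add: add.assoc)

text \<open>Since S is fully faithful, a level-m representative and a level-m' representative
  (m \<le> m') are identified iff the second is the image of the first under S^(m'-m).\<close>

context ff_endo
begin

lemma rel_le:
  assumes X: "X \<in> cOb C" and Y: "Y \<in> cOb C" and R: "((n, p, f), (n', p', f')) \<in> orb_rel C S X Y r"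
    and le: "n \<le> n'"
  shows "f' = Smpow S (n' - n) (Spow S n X) (Spow S p Y) f"
proof -
  from R obtain k k' where ra: "(n, p, f) \<in> orb_reps C S X Y r" "(n', p', f') \<in> orb_reps C S X Y r"
    and e: "n + k = n' + k'"
      "Smpow S k (Spow S n X) (Spow S p Y) f = Smpow S k' (Spow S n' X) (Spow S p' Y) f'"
    unfolding rel_iff0 by blast
  define d where "d = n' - n"
  have k: "k = k' + d" using e(1) le unfolding d_def by simp
  have nn: "d + n = n'" using le unfolding d_def by simp
  have pp: "d + p = p'" using ra e(1) le unfolding reps_iff d_def by linarith
  have fh: "f \<in> cHom C (Spow S n X) (Spow S p Y)" and f'h: "f' \<in> cHom C (Spow S n' X) (Spow S p' Y)"
    using ra unfolding reps_iff by auto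
  have "Smpow S k' (Spow S n' X) (Spow S p' Y) (Smpow S d (Spow S n X) (Spow S p Y) f)
      = Smpow S k' (Spow S n' X) (Spow S p' Y) f'"
    using e(2) Smpow_split[of S k' d n X p Y f] k nn pp by simp
  moreover have "Smpow S d (Spow S n X) (Spow S p Y) f \<in> cHom C (Spow S n' X) (Spow S p' Y)"
    using Smpow_hom[OF spow_ob[OF X] spow_ob[OF Y] fh, of d] nn pp by simp
  ultimately show ?thesis
    using Smpow_inj[OF spow_ob[OF X] spow_ob[OF Y] _ f'h] unfolding d_def by metis
qed

lemma rel_iff:
  assumes X: "X \<in> cOb C" and Y: "Y \<in> cOb C"
  shows "((n, p, f), (n', p', f')) \<in> orb_rel C S X Y r \<longleftrightarrow>
   (n, p, f) \<in> orb_reps C S X Y r \<and> (n', p', f') \<in> orb_reps C S X Y r \<and>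
   (n \<le> n' \<longrightarrow> f' = Smpow S (n' - n) (Spow S n X) (Spow S p Y) f) \<and>
   (n' \<le> n \<longrightarrow> f = Smpow S (n - n') (Spow S n' X) (Spow S p' Y) f')"
proof
  assume R: "((n, p, f), (n', p', f')) \<in> orb_rel C S X Y r"
  then have R': "((n', p', f'), (n, p, f)) \<in> orb_rel C S X Y r"
    using equiv_rel[of C S X Y r] unfolding equiv_def sym_def by blast
  show "(n, p, f) \<in> orb_reps C S X Y r \<and> (n', p', f') \<in> orb_reps C S X Y r \<and>
   (n \<le> n' \<longrightarrow> f' = Smpow S (n' - n) (Spow S n X) (Spow S p Y) f) \<and>
   (n' \<le> n \<longrightarrow> f = Smpow S (n - n') (Spow S n' X) (Spow S p' Y) f')"
    using R rel_le[OF X Y R] rel_le[OF X Y R'] unfolding rel_iff0 by blast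
next
  assume H: "(n, p, f) \<in> orb_reps C S X Y r \<and> (n', p', f') \<in> orb_reps C S X Y r \<and>
   (n \<le> n' \<longrightarrow> f' = Smpow S (n' - n) (Spow S n X) (Spow S p Y) f) \<and>
   (n' \<le> n \<longrightarrow> f = Smpow S (n - n') (Spow S n' X) (Spow S p' Y) f')"
  show "((n, p, f), (n', p', f')) \<in> orb_rel C S X Y r"
  proof (cases "n \<le> n'")
    case True
    then show ?thesis using H unfolding rel_iff0
      by (intro conjI exI[of _ "n' - n"] exI[of _ 0]) auto
  next
    case False
    then show ?thesis using H unfolding rel_iff0
      by (intro conjI exI[of _ 0] exI[of _ "n - n'"]) auto
  qed
qed

end

text \<open>The component of a class c of degree r at level m: its unique representative
  S^m X \<rightarrow> S^(m+r) Y, which exists for every m \<ge> -r because S is fully faithful.\<close>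

definition atl :: "int \<Rightarrow> (nat \<times> nat \<times> 'm) set \<Rightarrow> nat \<Rightarrow> 'm" where
  "atl r c m = (THE g. (m, lv r m, g) \<in> c)"

context ff_endo
begin

context
  fixes X Y :: 'o and r :: int
  assumes X: "X \<in> cOb C" and Y: "Y \<in> cOb C"
begin

lemma cls_of_mem:
  assumes c: "c \<in> orb_hom C S X Y r" and a: "a \<in> c"
  shows "a \<in> orb_reps C S X Y r" "c = orb_cls C S X Y r a"
proof -
  obtain x where x: "c = orb_rel C S X Y r `` {x}" "x \<in> orb_reps C S X Y r"
    using c unfolding orb_hom_def by (rule quotientE)
  have "(x, a) \<in> orb_rel C S X Y r" using a x by simp
  note H = equiv_class_eq_iff[OF equiv_rel, THEN iffD1, OF this]
  show "a \<in> orb_reps C S X Y r" using H by simp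
  show "c = orb_cls C S X Y r a" using H x(1) unfolding orb_cls_def by simp
qed

lemma cls_in: "a \<in> orb_reps C S X Y r \<Longrightarrow> orb_cls C S X Y r a \<in> orb_hom C S X Y r"
  unfolding orb_cls_def orb_hom_def by (rule quotientI)

lemma self_in_cls: "a \<in> orb_reps C S X Y r \<Longrightarrow> a \<in> orb_cls C S X Y r a"
  unfolding orb_cls_def by (rule equiv_class_self[OF equiv_rel])

text \<open>A class has exactly one representative at every admissible level: above the level
  of a given representative it is obtained by applying S, below it by fullness of S.\<close>

lemma level_ex1:
  assumes c: "c \<in> orb_hom C S X Y r" and m: "0 \<le> int m + r"
  shows "\<exists>!g. (m, lv r m, g) \<in> c"
proof -
  obtain x where x: "c = orb_rel C S X Y r `` {x}" "x \<in> orb_reps C S X Y r"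
    using c unfolding orb_hom_def by (rule quotientE)
  obtain n0 p0 f0 where x0: "x = (n0, p0, f0)" by (cases x) auto
  have r0: "int p0 - int n0 = r" and f0: "f0 \<in> cHom C (Spow S n0 X) (Spow S p0 Y)"
    using x(2) unfolding x0 reps_iff by auto
  have lvm: "int (lv r m) = int m + r" using lv_simp[OF m] .
  have mem: "\<And>g. (m, lv r m, g) \<in> c \<longleftrightarrow> g \<in> cHom C (Spow S m X) (Spow S (lv r m) Y) \<and>
      (n0 \<le> m \<longrightarrow> g = Smpow S (m - n0) (Spow S n0 X) (Spow S p0 Y) f0) \<and>
      (m \<le> n0 \<longrightarrow> f0 = Smpow S (n0 - m) (Spow S m X) (Spow S (lv r m) Y) g)"
    using x(2) unfolding x x0 by (simp add: rel_iff[OF X Y] reps_iff lvm)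
  show ?thesis
  proof (cases "n0 \<le> m")
    case True
    define g where "g = Smpow S (m - n0) (Spow S n0 X) (Spow S p0 Y) f0"
    have "int (m - n0 + p0) = int (lv r m)" using True r0 lvm by (simp add: of_nat_diff)
    then have "Spow S (m - n0) (Spow S p0 Y) = Spow S (lv r m) Y" by (simp only: Spow_add of_nat_eq_iff)
    moreover have "Spow S (m - n0) (Spow S n0 X) = Spow S m X" using True by simp
    ultimately have "g \<in> cHom C (Spow S m X) (Spow S (lv r m) Y)"
      using Smpow_hom[OF spow_ob[OF X] spow_ob[OF Y] f0, of "m - n0"] unfolding g_def by simp
    then have "(m, lv r m, g) \<in> c" unfolding mem using True unfolding g_def by auto
    moreover have "\<And>g'. (m, lv r m, g') \<in> c \<Longrightarrow> g' = g" unfolding mem g_def using True by auto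
    ultimately show ?thesis by blast
  next
    case False
    define d where "d = n0 - m"
    have e1: "Spow S d (Spow S m X) = Spow S n0 X" using False unfolding d_def by simp
    have "int (d + lv r m) = int p0" using False r0 lvm unfolding d_def by (simp add: of_nat_diff)
    then have e2: "Spow S d (Spow S (lv r m) Y) = Spow S p0 Y" by (simp only: Spow_add of_nat_eq_iff)
    have "f0 \<in> cHom C (Spow S d (Spow S m X)) (Spow S d (Spow S (lv r m) Y))"
      unfolding e1 e2 by (rule f0)
    then obtain g where g: "g \<in> cHom C (Spow S m X) (Spow S (lv r m) Y)"
        "Smpow S d (Spow S m X) (Spow S (lv r m) Y) g = f0"
      using Smpow_surj[OF spow_ob[OF X] spow_ob[OF Y]] by blast
    have "(m, lv r m, g) \<in> c" unfolding mem using g False unfolding d_def by auto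
    moreover have "g' = g" if "(m, lv r m, g') \<in> c" for g'
    proof -
      have "g' \<in> cHom C (Spow S m X) (Spow S (lv r m) Y)"
        "Smpow S d (Spow S m X) (Spow S (lv r m) Y) g' = f0"
        using that unfolding mem d_def using False by auto
      then show "g' = g" using Smpow_inj[OF spow_ob[OF X] spow_ob[OF Y] _ g(1)] g(2) by metis
    qed
    ultimately show ?thesis by blast
  qed
qed

lemma at_mem: "c \<in> orb_hom C S X Y r \<Longrightarrow> 0 \<le> int m + r \<Longrightarrow> (m, lv r m, atl r c m) \<in> c"
  unfolding atl_def by (rule theI', rule level_ex1)

lemma at_uniq:
  assumes c: "c \<in> orb_hom C S X Y r" and mem: "(m, q, g) \<in> c"
  shows "0 \<le> int m + r" "q = lv r m" "g = atl r c m"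
proof -
  have "(m, q, g) \<in> orb_reps C S X Y r" using cls_of_mem(1)[OF c mem] .
  then have qr: "int q - int m = r" unfolding reps_iff by simp
  then show "0 \<le> int m + r" by simp
  show q: "q = lv r m" using qr unfolding lv_def by simp
  show "g = atl r c m" unfolding atl_def
    by (rule the1_equality[symmetric], rule level_ex1[OF c], use qr in simp, use mem q in simp)
qed

lemma at_hom: "c \<in> orb_hom C S X Y r \<Longrightarrow> 0 \<le> int m + r \<Longrightarrow>
   atl r c m \<in> cHom C (Spow S m X) (Spow S (lv r m) Y)"
  using cls_of_mem(1)[OF _ at_mem] unfolding reps_iff by blast

lemma at_lift:
  assumes c: "c \<in> orb_hom C S X Y r" and m: "0 \<le> int m + r" and le: "m \<le> M"
  shows "atl r c M = Smpow S (M - m) (Spow S m X) (Spow S (lv r m) Y) (atl r c m)"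
proof -
  have M: "0 \<le> int M + r" using m le by simp
  have "c = orb_cls C S X Y r (m, lv r m, atl r c m)" using cls_of_mem(2)[OF c at_mem[OF c m]] .
  with at_mem[OF c M] have "((m, lv r m, atl r c m), (M, lv r M, atl r c M)) \<in> orb_rel C S X Y r"
    unfolding orb_cls_def by (metis Image_singleton_iff)
  then show ?thesis using le unfolding rel_iff[OF X Y] by blast
qed

lemma at_cls:
  assumes a: "(n, p, f) \<in> orb_reps C S X Y r"
  shows "atl r (orb_cls C S X Y r (n, p, f)) n = f" "0 \<le> int n + r" "p = lv r n"
  using at_uniq[OF cls_in[OF a] self_in_cls[OF a]] by auto

lemma cls_lift:
  assumes a: "(N, lv r N, h) \<in> orb_reps C S X Y r" and le: "N \<le> M"
  shows "atl r (orb_cls C S X Y r (N, lv r N, h)) M = Smpow S (M - N) (Spow S N X) (Spow S (lv r N) Y) h"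
  using at_lift[OF cls_in[OF a] at_cls(2)[OF a] le] at_cls(1)[OF a] by simp

lemma at_lift_gen:
  assumes c: "c \<in> orb_hom C S X Y r" and m: "0 \<le> int m + r" and le: "m \<le> M" and k: "k = M - m"
  shows "Smpow S k (Spow S m X) (Spow S (lv r m) Y) (atl r c m) = atl r c M"
  using at_lift[OF c m le] k by simp

lemma objX: "m \<le> M \<Longrightarrow> k = M - m \<Longrightarrow> Spow S k (Spow S m X) = Spow S M X"
  by simp

lemma objY: "0 \<le> int m + r \<Longrightarrow> m \<le> M \<Longrightarrow> k = M - m \<Longrightarrow> Spow S k (Spow S (lv r m) Y) = Spow S (lv r M) Y"
  using lv_shift by simp

lemma some_rep:
  assumes c: "c \<in> orb_hom C S X Y r"
  obtains n where "(SOME x. x \<in> c) = (n, lv r n, atl r c n)" "0 \<le> int n + r"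
proof -
  have "c \<noteq> {}" by (rule in_quotient_imp_non_empty[OF equiv_rel c[unfolded orb_hom_def]])
  then have mem: "(SOME x. x \<in> c) \<in> c" by (simp add: some_in_eq)
  obtain n q g where e: "(SOME x. x \<in> c) = (n, q, g)" by (cases "SOME x. x \<in> c") auto
  have m: "(n, q, g) \<in> c" using mem unfolding e .
  show ?thesis
    by (rule that[of n], unfold e, use at_uniq[OF c m] in simp_all)
qed

lemma eventually_level: "eventually (\<lambda>M. 0 \<le> int M + r) sequentially"
  by (rule eventually_sequentiallyI[of "nat (- r)"]) simp

lemma eventually_at_hom: "c \<in> orb_hom C S X Y r \<Longrightarrow>
    eventually (\<lambda>M. atl r c M \<in> cHom C (Spow S M X) (Spow S (lv r M) Y)) sequentially"
  using eventually_level by (rule eventually_mono) (rule at_hom)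

lemma cls_ext:
  assumes c: "c \<in> orb_hom C S X Y r" and d: "d \<in> orb_hom C S X Y r" and m: "0 \<le> int m + r"
    and eq: "atl r c m = atl r d m"
  shows "c = d"
  using cls_of_mem(2)[OF c at_mem[OF c m]] cls_of_mem(2)[OF d at_mem[OF d m]] eq by simp

lemma eventually_eq_cls:
  assumes c: "c \<in> orb_hom C S X Y r" and d: "d \<in> orb_hom C S X Y r"
    and e: "eventually (\<lambda>M. atl r c M = atl r d M) sequentially"
  shows "c = d"
proof -
  obtain M where "0 \<le> int M + r" "atl r c M = atl r d M"
    using eventually_happens'[OF sequentially_bot eventually_conj[OF eventually_level e]] by blast
  then show ?thesis using cls_ext[OF c d] by blast
qed

end

end

lemma filterlim_lv: "filterlim (lv r) sequentially sequentially"
  unfolding filterlim_at_top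
proof
  fix Z :: nat
  show "eventually (\<lambda>M. Z \<le> lv r M) sequentially"
    by (rule eventually_sequentiallyI[of "Z + nat (- r)"]) (simp add: lv_def)
qed

lemma eventually_lv: "eventually P sequentially \<Longrightarrow> eventually (\<lambda>M. P (lv r M)) sequentially"
  using eventually_compose_filterlim filterlim_lv by blast

section \<open>The operations of the orbit category are computed componentwise\<close>

context ff_endo
begin

context
  fixes X Y :: 'o and r :: int
  assumes X: "X \<in> cOb C" and Y: "Y \<in> cOb C"
begin

lemma add_props:
  assumes c: "c \<in> orb_hom C S X Y r" and d: "d \<in> orb_hom C S X Y r"
  shows "orb_add C S X Y r c d \<in> orb_hom C S X Y r"
    "eventually (\<lambda>M. atl r (orb_add C S X Y r c d) M
       = cAdd C (Spow S M X) (Spow S (lv r M) Y) (atl r c M) (atl r d M)) sequentially"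
proof -
  obtain n where n: "(SOME x. x \<in> c) = (n, lv r n, atl r c n)" "0 \<le> int n + r"
    using some_rep[OF X Y c] by blast
  obtain n' where n': "(SOME x. x \<in> d) = (n', lv r n', atl r d n')" "0 \<le> int n' + r"
    using some_rep[OF X Y d] by blast
  define N where "N = max n n'"
  have N: "0 \<le> int N + r" "n \<le> N" "n' \<le> N" using n(2) unfolding N_def by auto
  define h where "h = cAdd C (Spow S N X) (Spow S (lv r N) Y) (atl r c N) (atl r d N)"
  have lvN: "lv r n + (N - n) = lv r N" using lv_shift[OF n(2) N(2)] by simp
  have eq: "orb_add C S X Y r c d = orb_cls C S X Y r (N, lv r N, h)"
    unfolding orb_add_def n(1) n'(1) Let_def prod.case N_def[symmetric] lvN h_def
      at_lift_gen[OF X Y c n(2) N(2) refl] at_lift_gen[OF X Y d n'(2) N(3) refl] ..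
  have hh: "h \<in> cHom C (Spow S N X) (Spow S (lv r N) Y)"
    unfolding h_def
    by (rule hm_addc[OF kc_hm[OF KC spow_ob[OF X] spow_ob[OF Y]] at_hom[OF X Y c N(1)] at_hom[OF X Y d N(1)]])
  have hr: "(N, lv r N, h) \<in> orb_reps C S X Y r" unfolding reps_iff using hh lv_simp[OF N(1)] by simp
  show "orb_add C S X Y r c d \<in> orb_hom C S X Y r" unfolding eq by (rule cls_in[OF X Y hr])
  show "eventually (\<lambda>M. atl r (orb_add C S X Y r c d) M
       = cAdd C (Spow S M X) (Spow S (lv r M) Y) (atl r c M) (atl r d M)) sequentially"
  proof (rule eventually_sequentiallyI[of N])
    fix M assume M: "N \<le> M"
    have "atl r (orb_add C S X Y r c d) M = Smpow S (M - N) (Spow S N X) (Spow S (lv r N) Y) h"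
      unfolding eq by (rule cls_lift[OF X Y hr M])
    also have "\<dots> = cAdd C (Spow S (M - N) (Spow S N X)) (Spow S (M - N) (Spow S (lv r N) Y))
        (Smpow S (M - N) (Spow S N X) (Spow S (lv r N) Y) (atl r c N))
        (Smpow S (M - N) (Spow S N X) (Spow S (lv r N) Y) (atl r d N))"
      unfolding h_def
      by (rule Smpow_add[OF spow_ob[OF X] spow_ob[OF Y] at_hom[OF X Y c N(1)] at_hom[OF X Y d N(1)]])
    also have "\<dots> = cAdd C (Spow S M X) (Spow S (lv r M) Y) (atl r c M) (atl r d M)"
      by (simp only: objX[OF X Y M refl] objY[OF X Y N(1) M refl]
          at_lift_gen[OF X Y c N(1) M refl] at_lift_gen[OF X Y d N(1) M refl])
    finally show "atl r (orb_add C S X Y r c d) M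
       = cAdd C (Spow S M X) (Spow S (lv r M) Y) (atl r c M) (atl r d M)" .
  qed
qed

lemma smul_props:
  assumes c: "c \<in> orb_hom C S X Y r"
  shows "orb_smul C S X Y r a c \<in> orb_hom C S X Y r"
    "eventually (\<lambda>M. atl r (orb_smul C S X Y r a c) M
       = cSmul C (Spow S M X) (Spow S (lv r M) Y) a (atl r c M)) sequentially"
proof -
  obtain N where n: "(SOME x. x \<in> c) = (N, lv r N, atl r c N)" and N: "0 \<le> int N + r"
    using some_rep[OF X Y c] by blast
  define h where "h = cSmul C (Spow S N X) (Spow S (lv r N) Y) a (atl r c N)"
  have eq: "orb_smul C S X Y r a c = orb_cls C S X Y r (N, lv r N, h)"
    unfolding orb_smul_def n prod.case h_def ..
  have hh: "h \<in> cHom C (Spow S N X) (Spow S (lv r N) Y)"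
    unfolding h_def by (rule hm_smulc[OF kc_hm[OF KC spow_ob[OF X] spow_ob[OF Y]] at_hom[OF X Y c N]])
  have hr: "(N, lv r N, h) \<in> orb_reps C S X Y r" unfolding reps_iff using hh lv_simp[OF N] by simp
  show "orb_smul C S X Y r a c \<in> orb_hom C S X Y r" unfolding eq by (rule cls_in[OF X Y hr])
  show "eventually (\<lambda>M. atl r (orb_smul C S X Y r a c) M
       = cSmul C (Spow S M X) (Spow S (lv r M) Y) a (atl r c M)) sequentially"
  proof (rule eventually_sequentiallyI[of N])
    fix M assume M: "N \<le> M"
    have "atl r (orb_smul C S X Y r a c) M = Smpow S (M - N) (Spow S N X) (Spow S (lv r N) Y) h"
      unfolding eq by (rule cls_lift[OF X Y hr M])
    also have "\<dots> = cSmul C (Spow S (M - N) (Spow S N X)) (Spow S (M - N) (Spow S (lv r N) Y)) a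
        (Smpow S (M - N) (Spow S N X) (Spow S (lv r N) Y) (atl r c N))"
      unfolding h_def by (rule Smpow_smul[OF spow_ob[OF X] spow_ob[OF Y] at_hom[OF X Y c N]])
    also have "\<dots> = cSmul C (Spow S M X) (Spow S (lv r M) Y) a (atl r c M)"
      by (simp only: objX[OF X Y M refl] objY[OF X Y N M refl] at_lift_gen[OF X Y c N M refl])
    finally show "atl r (orb_smul C S X Y r a c) M = cSmul C (Spow S M X) (Spow S (lv r M) Y) a (atl r c M)" .
  qed
qed

lemma zero_props:
  shows "orb_zero C S X Y r \<in> orb_hom C S X Y r"
    "eventually (\<lambda>M. atl r (orb_zero C S X Y r) M = cZero C (Spow S M X) (Spow S (lv r M) Y)) sequentially"
proof -
  define N where "N = nat (- r)"
  have N: "0 \<le> int N + r" unfolding N_def by simp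
  have nr: "nat r = lv r N" unfolding N_def lv_def by simp
  define h where "h = cZero C (Spow S N X) (Spow S (lv r N) Y)"
  have eq: "orb_zero C S X Y r = orb_cls C S X Y r (N, lv r N, h)"
    unfolding orb_zero_def h_def N_def[symmetric] nr ..
  have hh: "h \<in> cHom C (Spow S N X) (Spow S (lv r N) Y)"
    unfolding h_def by (rule hm_zero[OF kc_hm[OF KC spow_ob[OF X] spow_ob[OF Y]]])
  have hr: "(N, lv r N, h) \<in> orb_reps C S X Y r" unfolding reps_iff using hh lv_simp[OF N] by simp
  show "orb_zero C S X Y r \<in> orb_hom C S X Y r" unfolding eq by (rule cls_in[OF X Y hr])
  show "eventually (\<lambda>M. atl r (orb_zero C S X Y r) M = cZero C (Spow S M X) (Spow S (lv r M) Y)) sequentially"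
  proof (rule eventually_sequentiallyI[of N])
    fix M assume M: "N \<le> M"
    have "atl r (orb_zero C S X Y r) M = Smpow S (M - N) (Spow S N X) (Spow S (lv r N) Y) h"
      unfolding eq by (rule cls_lift[OF X Y hr M])
    also have "\<dots> = cZero C (Spow S M X) (Spow S (lv r M) Y)"
      unfolding h_def Smpow_zero[OF spow_ob[OF X] spow_ob[OF Y]]
      by (simp only: objX[OF X Y M refl] objY[OF X Y N M refl])
    finally show "atl r (orb_zero C S X Y r) M = cZero C (Spow S M X) (Spow S (lv r M) Y)" .
  qed
qed

end

lemma id_props:
  assumes X: "X \<in> cOb C"
  shows "orb_cls C S X X 0 (0, 0, cId C X) \<in> orb_hom C S X X 0"
    "eventually (\<lambda>M. atl 0 (orb_cls C S X X 0 (0, 0, cId C X)) M = cId C (Spow S M X)) sequentially"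
proof -
  have hr: "(0, lv 0 0, cId C X) \<in> orb_reps C S X X 0" unfolding reps_iff using kc_id[OF KC X] by simp
  show "orb_cls C S X X 0 (0, 0, cId C X) \<in> orb_hom C S X X 0" using cls_in[OF X X hr] by simp
  show "eventually (\<lambda>M. atl 0 (orb_cls C S X X 0 (0, 0, cId C X)) M = cId C (Spow S M X)) sequentially"
    using cls_lift[OF X X hr] Smpow_id[OF X] by (intro eventually_sequentiallyI[of 0]) simp
qed

lemma comp_props:
  assumes X: "X \<in> cOb C" and Y: "Y \<in> cOb C" and Z: "Z \<in> cOb C"
    and g: "g \<in> orb_hom C S Y Z b" and f: "f \<in> orb_hom C S X Y a" and r: "r = a + b"
  shows "orb_comp C S X Y Z b a g f \<in> orb_hom C S X Z r"
    "eventually (\<lambda>M. atl r (orb_comp C S X Y Z b a g f) M =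
        cComp C (Spow S M X) (Spow S (lv a M) Y) (Spow S (lv b (lv a M)) Z) (atl b g (lv a M)) (atl a f M))
      sequentially"
proof -
  obtain n1 where n1: "(SOME x. x \<in> g) = (n1, lv b n1, atl b g n1)" "0 \<le> int n1 + b"
    using some_rep[OF Y Z g] by blast
  obtain n2 where n2: "(SOME x. x \<in> f) = (n2, lv a n2, atl a f n2)" "0 \<le> int n2 + a"
    using some_rep[OF X Y f] by blast
  define N where "N = max n1 (lv a n2)"
  define s where "s = n2 + (N - lv a n2)"
  have N1: "n1 \<le> N" and N2: "lv a n2 \<le> N" unfolding N_def by auto
  have Nb: "0 \<le> int N + b" using n1(2) N1 by simp
  have sa: "int s + a = int N" using N2 lv_simp[OF n2(2)] unfolding s_def by (simp add: of_nat_diff)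
  have s_a: "0 \<le> int s + a" using sa by simp
  have lvs: "lv a s = N" unfolding lv_def using sa by simp
  have lvr: "lv r s = lv b N" using lv_lv[OF s_a r] lvs by simp
  have t: "lv b n1 + (N - n1) = lv b N" using lv_shift[OF n1(2) N1] by simp
  have fs: "Smpow S (N - lv a n2) (Spow S n2 X) (Spow S (lv a n2) Y) (atl a f n2) = atl a f s"
    by (rule at_lift_gen[OF X Y f n2(2)]) (simp_all add: s_def)
  define h where "h = cComp C (Spow S s X) (Spow S N Y) (Spow S (lv b N) Z) (atl b g N) (atl a f s)"
  have eq: "orb_comp C S X Y Z b a g f = orb_cls C S X Z r (s, lv r s, h)"
    unfolding orb_comp_def n1(1) n2(1) prod.case Let_def N_def[symmetric] s_def[symmetric] t
      at_lift_gen[OF Y Z g n1(2) N1 refl] fs lvr h_def r lvr[unfolded r] ..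
  have fsh: "atl a f s \<in> cHom C (Spow S s X) (Spow S N Y)" using at_hom[OF X Y f s_a] unfolding lvs .
  have gNh: "atl b g N \<in> cHom C (Spow S N Y) (Spow S (lv b N) Z)" using at_hom[OF Y Z g Nb] .
  have hh: "h \<in> cHom C (Spow S s X) (Spow S (lv r s) Z)" unfolding lvr h_def
    by (rule kc_comp[OF KC spow_ob[OF X] spow_ob[OF Y] spow_ob[OF Z] fsh gNh])
  have sr: "0 \<le> int s + r" using sa Nb r by simp
  have hr: "(s, lv r s, h) \<in> orb_reps C S X Z r" unfolding reps_iff using hh lv_simp[OF sr] by simp
  show "orb_comp C S X Y Z b a g f \<in> orb_hom C S X Z r" unfolding eq by (rule cls_in[OF X Z hr])
  show "eventually (\<lambda>M. atl r (orb_comp C S X Y Z b a g f) M =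
        cComp C (Spow S M X) (Spow S (lv a M) Y) (Spow S (lv b (lv a M)) Z) (atl b g (lv a M)) (atl a f M))
      sequentially"
  proof (rule eventually_sequentiallyI[of s])
    fix M assume Ms: "s \<le> M"
    have la: "M - s + N = lv a M" using lv_shift[OF s_a Ms] unfolding lvs .
    have NL: "N \<le> lv a M" and kk: "M - s = lv a M - N" using la by auto
    have "atl r (orb_comp C S X Y Z b a g f) M = Smpow S (M - s) (Spow S s X) (Spow S (lv b N) Z) h"
      using cls_lift[OF X Z hr Ms] unfolding eq lvr .
    also have "\<dots> = cComp C (Spow S (M - s) (Spow S s X)) (Spow S (M - s) (Spow S N Y))
        (Spow S (M - s) (Spow S (lv b N) Z))
        (Smpow S (M - s) (Spow S N Y) (Spow S (lv b N) Z) (atl b g N))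
        (Smpow S (M - s) (Spow S s X) (Spow S N Y) (atl a f s))"
      unfolding h_def by (rule Smpow_comp[OF spow_ob[OF X] spow_ob[OF Y] spow_ob[OF Z] fsh gNh])
    also have "\<dots> = cComp C (Spow S M X) (Spow S (lv a M) Y) (Spow S (lv b (lv a M)) Z)
        (atl b g (lv a M)) (atl a f M)"
      by (simp only: objX[OF X Y Ms refl] objY[OF X Y s_a Ms refl, unfolded lvs] objY[OF Y Z Nb NL kk]
          at_lift_gen[OF Y Z g Nb NL kk] at_lift_gen[OF X Y f s_a Ms refl, unfolded lvs])
    finally show "atl r (orb_comp C S X Y Z b a g f) M =
        cComp C (Spow S M X) (Spow S (lv a M) Y) (Spow S (lv b (lv a M)) Z) (atl b g (lv a M)) (atl a f M)" .
  qed
qed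

end

section \<open>C_{/S} # Z is a k-linear category\<close>

text \<open>Each axiom is inherited from C: both sides are classes whose components eventually
  agree by the corresponding axiom of C.\<close>

context ff_endo
begin

context
  fixes X Y :: 'o and r :: int
  assumes X: "X \<in> cOb C" and Y: "Y \<in> cOb C"
begin

lemmas hm_levels = kc_hm[OF KC spow_ob[OF X] spow_ob[OF Y]]

lemma orb_add_assoc:
  assumes c: "c \<in> orb_hom C S X Y r" and d: "d \<in> orb_hom C S X Y r" and e: "e \<in> orb_hom C S X Y r"
  shows "orb_add C S X Y r (orb_add C S X Y r c d) e = orb_add C S X Y r c (orb_add C S X Y r d e)"
    (is "?l = ?r")
proof -
  note cd = add_props[OF X Y c d] and de = add_props[OF X Y d e]
  note l = add_props[OF X Y cd(1) e] and r = add_props[OF X Y c de(1)]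
  have "eventually (\<lambda>M. atl r ?l M = atl r ?r M) sequentially"
    using cd(2) de(2) l(2) r(2) eventually_at_hom[OF X Y c] eventually_at_hom[OF X Y d]
      eventually_at_hom[OF X Y e]
    by eventually_elim (simp add: hm_assoc[OF hm_levels])
  then show ?thesis by (rule eventually_eq_cls[OF X Y l(1) r(1)])
qed

lemma orb_add_comm:
  assumes c: "c \<in> orb_hom C S X Y r" and d: "d \<in> orb_hom C S X Y r"
  shows "orb_add C S X Y r c d = orb_add C S X Y r d c" (is "?l = ?r")
proof -
  note cd = add_props[OF X Y c d] and dc = add_props[OF X Y d c]
  have "eventually (\<lambda>M. atl r ?l M = atl r ?r M) sequentially"
    using cd(2) dc(2) eventually_at_hom[OF X Y c] eventually_at_hom[OF X Y d]
    by eventually_elim (simp add: hm_comm[OF hm_levels])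
  then show ?thesis by (rule eventually_eq_cls[OF X Y cd(1) dc(1)])
qed

lemma orb_zero_add:
  assumes c: "c \<in> orb_hom C S X Y r"
  shows "orb_add C S X Y r (orb_zero C S X Y r) c = c" (is "?l = _")
proof -
  note z = zero_props[OF X Y, of r] note zc = add_props[OF X Y z(1) c]
  have "eventually (\<lambda>M. atl r ?l M = atl r c M) sequentially"
    using zc(2) z(2) eventually_at_hom[OF X Y c]
    by eventually_elim (simp add: hm_zl[OF hm_levels])
  then show ?thesis by (rule eventually_eq_cls[OF X Y zc(1) c])
qed

lemma orb_neg:
  assumes c: "c \<in> orb_hom C S X Y r"
  shows "\<exists>d\<in>orb_hom C S X Y r. orb_add C S X Y r c d = orb_zero C S X Y r"
proof -
  define m0 where "m0 = nat (- r)"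
  have m0: "0 \<le> int m0 + r" unfolding m0_def by simp
  have cm: "atl r c m0 \<in> cHom C (Spow S m0 X) (Spow S (lv r m0) Y)" by (rule at_hom[OF X Y c m0])
  obtain g0 where g0: "g0 \<in> cHom C (Spow S m0 X) (Spow S (lv r m0) Y)"
      "cAdd C (Spow S m0 X) (Spow S (lv r m0) Y) (atl r c m0) g0 = cZero C (Spow S m0 X) (Spow S (lv r m0) Y)"
    using hm_neg[OF hm_levels cm] by blast
  define d where "d = orb_cls C S X Y r (m0, lv r m0, g0)"
  have hr: "(m0, lv r m0, g0) \<in> orb_reps C S X Y r" unfolding reps_iff using g0(1) lv_simp[OF m0] by simp
  have d: "d \<in> orb_hom C S X Y r" unfolding d_def by (rule cls_in[OF X Y hr])
  note cd = add_props[OF X Y c d] and z = zero_props[OF X Y, of r]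
  have "eventually (\<lambda>M. atl r (orb_add C S X Y r c d) M = atl r (orb_zero C S X Y r) M) sequentially"
    using cd(2) z(2) eventually_ge_at_top[of m0]
  proof eventually_elim
    case (elim M)
    then have M: "m0 \<le> M" by simp
    have "atl r (orb_add C S X Y r c d) M = cAdd C (Spow S M X) (Spow S (lv r M) Y) (atl r c M) (atl r d M)"
      using elim(1) .
    also have "\<dots> = cAdd C (Spow S (M - m0) (Spow S m0 X)) (Spow S (M - m0) (Spow S (lv r m0) Y))
       (Smpow S (M - m0) (Spow S m0 X) (Spow S (lv r m0) Y) (atl r c m0))
       (Smpow S (M - m0) (Spow S m0 X) (Spow S (lv r m0) Y) g0)"
      unfolding d_def cls_lift[OF X Y hr M]
      by (simp only: objX[OF X Y M refl] objY[OF X Y m0 M refl] at_lift_gen[OF X Y c m0 M refl])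
    also have "\<dots> = Smpow S (M - m0) (Spow S m0 X) (Spow S (lv r m0) Y)
       (cAdd C (Spow S m0 X) (Spow S (lv r m0) Y) (atl r c m0) g0)"
      by (rule Smpow_add[OF spow_ob[OF X] spow_ob[OF Y] cm g0(1), symmetric])
    also have "\<dots> = cZero C (Spow S M X) (Spow S (lv r M) Y)"
      unfolding g0(2) Smpow_zero[OF spow_ob[OF X] spow_ob[OF Y]]
      by (simp only: objX[OF X Y M refl] objY[OF X Y m0 M refl])
    also have "\<dots> = atl r (orb_zero C S X Y r) M" using elim(2) by simp
    finally show ?case .
  qed
  then show ?thesis using eventually_eq_cls[OF X Y cd(1) z(1)] d by blast
qed

lemma orb_smul_add:
  assumes c: "c \<in> orb_hom C S X Y r" and d: "d \<in> orb_hom C S X Y r"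
  shows "orb_smul C S X Y r a (orb_add C S X Y r c d)
       = orb_add C S X Y r (orb_smul C S X Y r a c) (orb_smul C S X Y r a d)" (is "?l = ?r")
proof -
  note cd = add_props[OF X Y c d] and sc = smul_props[OF X Y c, of a] and sd = smul_props[OF X Y d, of a]
  note l = smul_props[OF X Y cd(1), of a] and r = add_props[OF X Y sc(1) sd(1)]
  have "eventually (\<lambda>M. atl r ?l M = atl r ?r M) sequentially"
    using cd(2) sc(2) sd(2) l(2) r(2) eventually_at_hom[OF X Y c] eventually_at_hom[OF X Y d]
    by eventually_elim (simp add: hm_sadd[OF hm_levels])
  then show ?thesis by (rule eventually_eq_cls[OF X Y l(1) r(1)])
qed

lemma orb_add_smul:
  assumes c: "c \<in> orb_hom C S X Y r"
  shows "orb_smul C S X Y r (a + b) c = orb_add C S X Y r (orb_smul C S X Y r a c) (orb_smul C S X Y r b c)"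
    (is "?l = ?r")
proof -
  note sa = smul_props[OF X Y c, of a] and sb = smul_props[OF X Y c, of b]
  note l = smul_props[OF X Y c, of "a + b"] and r = add_props[OF X Y sa(1) sb(1)]
  have "eventually (\<lambda>M. atl r ?l M = atl r ?r M) sequentially"
    using sa(2) sb(2) l(2) r(2) eventually_at_hom[OF X Y c]
    by eventually_elim (simp add: hm_adds[OF hm_levels])
  then show ?thesis by (rule eventually_eq_cls[OF X Y l(1) r(1)])
qed

lemma orb_mul_smul:
  assumes c: "c \<in> orb_hom C S X Y r"
  shows "orb_smul C S X Y r (a * b) c = orb_smul C S X Y r a (orb_smul C S X Y r b c)" (is "?l = ?r")
proof -
  note sb = smul_props[OF X Y c, of b]
  note l = smul_props[OF X Y c, of "a * b"] and r = smul_props[OF X Y sb(1), of a]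
  have "eventually (\<lambda>M. atl r ?l M = atl r ?r M) sequentially"
    using sb(2) l(2) r(2) eventually_at_hom[OF X Y c]
    by eventually_elim (simp add: hm_muls[OF hm_levels])
  then show ?thesis by (rule eventually_eq_cls[OF X Y l(1) r(1)])
qed

lemma orb_one_smul:
  assumes c: "c \<in> orb_hom C S X Y r"
  shows "orb_smul C S X Y r 1 c = c" (is "?l = _")
proof -
  note l = smul_props[OF X Y c, of 1]
  have "eventually (\<lambda>M. atl r ?l M = atl r c M) sequentially"
    using l(2) eventually_at_hom[OF X Y c]
    by eventually_elim (simp add: hm_ones[OF hm_levels])
  then show ?thesis by (rule eventually_eq_cls[OF X Y l(1) c])
qed

end

lemma orb_comp_assoc:
  assumes W: "W \<in> cOb C" and X: "X \<in> cOb C" and Y: "Y \<in> cOb C" and Z: "Z \<in> cOb C"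
    and f: "f \<in> orb_hom C S W X a" and g: "g \<in> orb_hom C S X Y b" and h: "h \<in> orb_hom C S Y Z c"
    and ab: "ab = a + b" and bc: "bc = b + c"
  shows "orb_comp C S W Y Z c ab h (orb_comp C S W X Y b a g f)
       = orb_comp C S W X Z bc a (orb_comp C S X Y Z c b h g) f" (is "?l = ?r")
proof -
  note gf = comp_props[OF W X Y g f ab] and hg = comp_props[OF X Y Z h g bc]
  have abc: "ab + c = a + bc" using ab bc by simp
  note l = comp_props[OF W Y Z h gf(1) refl] and r = comp_props[OF W X Z hg(1) f abc]
  have "eventually (\<lambda>M. atl (ab + c) ?l M = atl (ab + c) ?r M) sequentially"
    using gf(2) l(2) eventually_lv[OF hg(2), of a] r(2) eventually_at_hom[OF W X f]
      eventually_lv[OF eventually_at_hom[OF X Y g], of a]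
      eventually_lv[OF eventually_lv[OF eventually_at_hom[OF Y Z h], of b], of a]
      eventually_level[OF W X, of a] eventually_level[OF W X, of ab]
  proof eventually_elim
    case (elim M)
    have "lv ab M = lv b (lv a M)" using lv_lv[OF elim(8) ab] .
    moreover have "lv bc (lv a M) = lv c (lv b (lv a M))"
      using lv_lv[OF _ bc] elim(8,9) lv_simp ab by (metis add.assoc)
    ultimately show ?case
      using elim by (simp add: kc_assoc[OF KC spow_ob[OF W] spow_ob[OF X] spow_ob[OF Y] spow_ob[OF Z]])
  qed
  then show ?thesis by (rule eventually_eq_cls[OF W Z l(1) r(1)])
qed

lemma orb_id_left:
  assumes X: "X \<in> cOb C" and Y: "Y \<in> cOb C" and f: "f \<in> orb_hom C S X Y a"
  shows "orb_comp C S X Y Y 0 a (orb_cls C S Y Y 0 (0, 0, cId C Y)) f = f" (is "?l = _")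
proof -
  note i = id_props[OF Y] and l = comp_props[OF X Y Y id_props(1)[OF Y] f add_0_right[symmetric]]
  have "eventually (\<lambda>M. atl a ?l M = atl a f M) sequentially"
    using l(2) eventually_lv[OF i(2), of a] eventually_at_hom[OF X Y f]
    by eventually_elim (simp add: kc_idl[OF KC spow_ob[OF X] spow_ob[OF Y]])
  then show ?thesis by (rule eventually_eq_cls[OF X Y l(1) f])
qed

lemma orb_id_right:
  assumes X: "X \<in> cOb C" and Y: "Y \<in> cOb C" and f: "f \<in> orb_hom C S X Y a"
  shows "orb_comp C S X X Y a 0 f (orb_cls C S X X 0 (0, 0, cId C X)) = f" (is "?l = _")
proof -
  note i = id_props[OF X] and l = comp_props[OF X X Y f id_props(1)[OF X] add_0_left[symmetric]]
  have "eventually (\<lambda>M. atl a ?l M = atl a f M) sequentially"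
    using l(2) i(2) eventually_at_hom[OF X Y f]
    by eventually_elim (simp add: kc_idr[OF KC spow_ob[OF X] spow_ob[OF Y]])
  then show ?thesis by (rule eventually_eq_cls[OF X Y l(1) f])
qed

context
  fixes X Y Z and a b r :: int
  assumes X: "X \<in> cOb C" and Y: "Y \<in> cOb C" and Z: "Z \<in> cOb C" and r: "r = a + b"
begin

lemma lvr: "0 \<le> int M + a \<Longrightarrow> lv r M = lv b (lv a M)"
  using lv_lv[OF _ r] .

lemmas bilin = kc_bilin[OF KC spow_ob[OF X] spow_ob[OF Y] spow_ob[OF Z]]

lemma orb_comp_add_left:
  assumes f: "f \<in> orb_hom C S X Y a" and g: "g \<in> orb_hom C S Y Z b" and g': "g' \<in> orb_hom C S Y Z b"
  shows "orb_comp C S X Y Z b a (orb_add C S Y Z b g g') f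
     = orb_add C S X Z r (orb_comp C S X Y Z b a g f) (orb_comp C S X Y Z b a g' f)" (is "?l = ?r")
proof -
  note gg = add_props[OF Y Z g g'] and l = comp_props[OF X Y Z gg(1) f r]
  note c1 = comp_props[OF X Y Z g f r] and c2 = comp_props[OF X Y Z g' f r]
  note r = add_props[OF X Z c1(1) c2(1)]
  have "eventually (\<lambda>M. atl r ?l M = atl r ?r M) sequentially"
    using l(2) eventually_lv[OF gg(2), of a] c1(2) c2(2) r(2) eventually_at_hom[OF X Y f]
      eventually_lv[OF eventually_at_hom[OF Y Z g], of a] eventually_lv[OF eventually_at_hom[OF Y Z g'], of a]
      eventually_level[OF X Y, of a]
    by eventually_elim (simp add: lvr bilin(1))
  then show ?thesis by (rule eventually_eq_cls[OF X Z l(1) r(1)])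
qed

lemma orb_comp_add_right:
  assumes f: "f \<in> orb_hom C S X Y a" and f': "f' \<in> orb_hom C S X Y a" and g: "g \<in> orb_hom C S Y Z b"
  shows "orb_comp C S X Y Z b a g (orb_add C S X Y a f f')
     = orb_add C S X Z r (orb_comp C S X Y Z b a g f) (orb_comp C S X Y Z b a g f')" (is "?l = ?r")
proof -
  note ff = add_props[OF X Y f f'] and l = comp_props[OF X Y Z g ff(1) r]
  note c1 = comp_props[OF X Y Z g f r] and c2 = comp_props[OF X Y Z g f' r]
  note r = add_props[OF X Z c1(1) c2(1)]
  have "eventually (\<lambda>M. atl r ?l M = atl r ?r M) sequentially"
    using l(2) ff(2) c1(2) c2(2) r(2) eventually_at_hom[OF X Y f] eventually_at_hom[OF X Y f']
      eventually_lv[OF eventually_at_hom[OF Y Z g], of a] eventually_level[OF X Y, of a]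
    by eventually_elim (simp add: lvr bilin(2))
  then show ?thesis by (rule eventually_eq_cls[OF X Z l(1) r(1)])
qed

lemma orb_comp_smul_left:
  assumes f: "f \<in> orb_hom C S X Y a" and g: "g \<in> orb_hom C S Y Z b"
  shows "orb_comp C S X Y Z b a (orb_smul C S Y Z b k g) f = orb_smul C S X Z r k (orb_comp C S X Y Z b a g f)"
    (is "?l = ?r")
proof -
  note gg = smul_props[OF Y Z g, of k] and l = comp_props[OF X Y Z gg(1) f r]
  note c = comp_props[OF X Y Z g f r] and r = smul_props[OF X Z c(1), of k]
  have "eventually (\<lambda>M. atl r ?l M = atl r ?r M) sequentially"
    using l(2) eventually_lv[OF gg(2), of a] c(2) r(2) eventually_lv[OF eventually_at_hom[OF Y Z g], of a]
      eventually_at_hom[OF X Y f] eventually_level[OF X Y, of a]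
    by eventually_elim (simp add: lvr bilin(3))
  then show ?thesis by (rule eventually_eq_cls[OF X Z l(1) r(1)])
qed

lemma orb_comp_smul_right:
  assumes f: "f \<in> orb_hom C S X Y a" and g: "g \<in> orb_hom C S Y Z b"
  shows "orb_comp C S X Y Z b a g (orb_smul C S X Y a k f) = orb_smul C S X Z r k (orb_comp C S X Y Z b a g f)"
    (is "?l = ?r")
proof -
  note ff = smul_props[OF X Y f, of k] and l = comp_props[OF X Y Z g ff(1) r]
  note c = comp_props[OF X Y Z g f r] and r = smul_props[OF X Z c(1), of k]
  have "eventually (\<lambda>M. atl r ?l M = atl r ?r M) sequentially"
    using l(2) ff(2) c(2) r(2) eventually_lv[OF eventually_at_hom[OF Y Z g], of a]
      eventually_at_hom[OF X Y f] eventually_level[OF X Y, of a]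
    by eventually_elim (simp add: lvr bilin(4))
  then show ?thesis by (rule eventually_eq_cls[OF X Z l(1) r(1)])
qed

end

end

lemma smash_ob: "cOb (orbit_smash C S) = cOb C \<times> UNIV"
  by (simp add: orbit_smash_def)

lemma smash_simps:
  "cHom (orbit_smash C S) (X, i) (Y, j) = orb_hom C S X Y (i - j)"
  "cComp (orbit_smash C S) (X, i) (Y, j) (Z, k) g f = orb_comp C S X Y Z (j - k) (i - j) g f"
  "cId (orbit_smash C S) (X, i) = orb_cls C S X X 0 (0, 0, cId C X)"
  "cAdd (orbit_smash C S) (X, i) (Y, j) = orb_add C S X Y (i - j)"
  "cZero (orbit_smash C S) (X, i) (Y, j) = orb_zero C S X Y (i - j)"
  "cSmul (orbit_smash C S) (X, i) (Y, j) = orb_smul C S X Y (i - j)"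
  by (simp_all add: orbit_smash_def)

lemma ball_smash: "(\<forall>x\<in>cOb (orbit_smash C S). P x) \<longleftrightarrow> (\<forall>X\<in>cOb C. \<forall>i. P (X, i))"
  unfolding smash_ob by auto

context ff_endo
begin

lemma smash_hom_module:
  assumes X: "X \<in> cOb C" and Y: "Y \<in> cOb C"
  shows "hom_module (orbit_smash C S) (X, i) (Y, j)"
  unfolding hom_module_def Let_def smash_simps
  apply (intro conjI ballI allI)
  apply (rule zero_props(1)[OF X Y])
  apply (erule (1) add_props(1)[OF X Y])
  apply (erule smul_props(1)[OF X Y])
  apply (erule (2) orb_add_assoc[OF X Y])
  apply (erule (1) orb_add_comm[OF X Y])
  apply (erule orb_zero_add[OF X Y])
  apply (erule orb_neg[OF X Y])
  apply (erule (1) orb_smul_add[OF X Y])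
  apply (erule orb_add_smul[OF X Y])
  apply (erule orb_mul_smul[OF X Y])
  apply (erule orb_one_smul[OF X Y])
  done

theorem smash_klin_cat: "klin_cat (orbit_smash C S)"
  unfolding klin_cat_def ball_smash smash_simps
  apply (intro conjI ballI allI)
  subgoal by (rule smash_hom_module)
  subgoal using id_props(1) by simp
  subgoal by (rule comp_props(1), assumption+, simp)
  subgoal by (rule orb_comp_assoc, assumption+, simp, simp)
  subgoal using orb_id_left by simp
  subgoal using orb_id_right by simp
  subgoal by (rule orb_comp_add_left, assumption+, simp, assumption+)
  subgoal by (rule orb_comp_add_right, assumption+, simp, assumption+)
  subgoal by (rule orb_comp_smul_left, assumption+, simp, assumption+)
  subgoal by (rule orb_comp_smul_right, assumption+, simp, assumption+)
  done

end

section \<open>S' is an automorphism\<close>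

lemma shift_simps[simp]: "fob shift_functor (X, i) = (X, i - 1)" "fmor shift_functor A B f = f"
  by (simp_all add: shift_functor_def)

definition shift_inv :: "('o \<times> int, 'x, 'o \<times> int, 'x) lfun" where
  "shift_inv = \<lparr>fob = (\<lambda>(X, i). (X, i + 1)), fmor = (\<lambda>_ _ f. f)\<rparr>"

lemma shift_inv_simps[simp]: "fob shift_inv (X, i) = (X, i + 1)" "fmor shift_inv A B f = f"
  by (simp_all add: shift_inv_def)

context ff_endo
begin

text \<open>Both shifts are functors because all structure of C_{/S} # Z only depends on index
  differences.\<close>

lemma shift_functor: "klin_functor (orbit_smash C S) (orbit_smash C S) shift_functor"
  unfolding klin_functor_def ball_smash by (simp add: smash_klin_cat smash_simps smash_ob)

lemma shift_inv_functor: "klin_functor (orbit_smash C S) (orbit_smash C S) shift_inv"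
  unfolding klin_functor_def ball_smash by (simp add: smash_klin_cat smash_simps smash_ob)

theorem shift_automorphism: "klin_automorphism (orbit_smash C S) shift_functor"
  unfolding klin_automorphism_def ball_smash
  using shift_functor shift_inv_functor by (intro conjI exI[of _ shift_inv]) simp_all

section \<open>H is a k-linear functor, fully faithful\<close>

lemma H_simps[simp]: "fob (H_functor C S) X = (X, 0)"
  "fmor (H_functor C S) X Y f = orb_cls C S X Y 0 (0, 0, f)"
  by (simp_all add: H_functor_def)

lemma H_rep: "f \<in> cHom C X Y \<Longrightarrow> (0, lv 0 0, f) \<in> orb_reps C S X Y 0"
  unfolding reps_iff by simp

lemma H_in: "X \<in> cOb C \<Longrightarrow> Y \<in> cOb C \<Longrightarrow> f \<in> cHom C X Y \<Longrightarrow> orb_cls C S X Y 0 (0, 0, f) \<in> orb_hom C S X Y 0"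
  using cls_in[OF _ _ H_rep] by simp

lemma H_at: "X \<in> cOb C \<Longrightarrow> Y \<in> cOb C \<Longrightarrow> f \<in> cHom C X Y \<Longrightarrow>
    atl 0 (orb_cls C S X Y 0 (0, 0, f)) M = Smpow S M X Y f"
  using cls_lift[OF _ _ H_rep, of X Y f M] by simp

lemma H_comp:
  assumes X: "X \<in> cOb C" and Y: "Y \<in> cOb C" and Z: "Z \<in> cOb C" and f: "f \<in> cHom C X Y" and g: "g \<in> cHom C Y Z"
  shows "orb_cls C S X Z 0 (0, 0, cComp C X Y Z g f)
       = orb_comp C S X Y Z 0 0 (orb_cls C S Y Z 0 (0, 0, g)) (orb_cls C S X Y 0 (0, 0, f))" (is "?l = ?r")
proof -
  note r = comp_props[OF X Y Z H_in[OF Y Z g] H_in[OF X Y f] add_0_left[symmetric]]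
  have gf: "cComp C X Y Z g f \<in> cHom C X Z" by (rule kc_comp[OF KC X Y Z f g])
  have "eventually (\<lambda>M. atl 0 ?l M = atl 0 ?r M) sequentially"
    using r(2) by eventually_elim (simp add: H_at[OF X Z gf] H_at[OF Y Z g] H_at[OF X Y f] Smpow_comp[OF X Y Z f g])
  then show ?thesis by (rule eventually_eq_cls[OF X Z H_in[OF X Z gf] r(1)])
qed

lemma H_add:
  assumes X: "X \<in> cOb C" and Y: "Y \<in> cOb C" and f: "f \<in> cHom C X Y" and g: "g \<in> cHom C X Y"
  shows "orb_cls C S X Y 0 (0, 0, cAdd C X Y f g)
       = orb_add C S X Y 0 (orb_cls C S X Y 0 (0, 0, f)) (orb_cls C S X Y 0 (0, 0, g))" (is "?l = ?r")
proof -
  note r = add_props[OF X Y H_in[OF X Y f] H_in[OF X Y g]]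
  have fg: "cAdd C X Y f g \<in> cHom C X Y" by (rule hm_addc[OF kc_hm[OF KC X Y] f g])
  have "eventually (\<lambda>M. atl 0 ?l M = atl 0 ?r M) sequentially"
    using r(2) by eventually_elim (simp add: H_at[OF X Y fg] H_at[OF X Y g] H_at[OF X Y f] Smpow_add[OF X Y f g])
  then show ?thesis by (rule eventually_eq_cls[OF X Y H_in[OF X Y fg] r(1)])
qed

lemma H_smul:
  assumes X: "X \<in> cOb C" and Y: "Y \<in> cOb C" and f: "f \<in> cHom C X Y"
  shows "orb_cls C S X Y 0 (0, 0, cSmul C X Y a f) = orb_smul C S X Y 0 a (orb_cls C S X Y 0 (0, 0, f))"
    (is "?l = ?r")
proof -
  note r = smul_props[OF X Y H_in[OF X Y f], of a]
  have af: "cSmul C X Y a f \<in> cHom C X Y" by (rule hm_smulc[OF kc_hm[OF KC X Y] f])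
  have "eventually (\<lambda>M. atl 0 ?l M = atl 0 ?r M) sequentially"
    using r(2) by eventually_elim (simp add: H_at[OF X Y af] H_at[OF X Y f] Smpow_smul[OF X Y f])
  then show ?thesis by (rule eventually_eq_cls[OF X Y H_in[OF X Y af] r(1)])
qed

lemma H_functor: "klin_functor C (orbit_smash C S) (H_functor C S)"
  unfolding klin_functor_def
  by (simp add: KC smash_klin_cat smash_ob smash_simps H_in H_comp H_add H_smul)

text \<open>H is faithful since f is the level-0 component of H f, and full since a class of
  degree 0 is H of its level-0 component.\<close>

lemma H_faithful: "faithful C (H_functor C S)"
  unfolding faithful_def H_simps using H_at[of _ _ _ 0] by (metis Smpow.simps(1))

lemma H_full: "full C (orbit_smash C S) (H_functor C S)"
  unfolding full_def H_simps smash_simps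
proof (intro ballI)
  fix X Y c assume X: "X \<in> cOb C" and Y: "Y \<in> cOb C" and c: "c \<in> orb_hom C S X Y (0 - 0)"
  have c': "c \<in> orb_hom C S X Y 0" using c by simp
  have fh: "atl 0 c 0 \<in> cHom C X Y" using at_hom[OF X Y c', of 0] by simp
  have "orb_cls C S X Y 0 (0, 0, atl 0 c 0) = c"
    by (rule cls_ext[OF X Y H_in[OF X Y fh] c', of 0]) (simp_all add: H_at[OF X Y fh])
  then show "\<exists>f\<in>cHom C X Y. orb_cls C S X Y 0 (0, 0, f) = c" using fh by blast
qed

section \<open>H is essentially surjective\<close>

lemma orb_inv_comp:
  assumes X: "X \<in> cOb C" and Y: "Y \<in> cOb C"
    and fr: "(n, p, f) \<in> orb_reps C S X Y r" and gr: "(p, n, g) \<in> orb_reps C S Y X s" and z: "0 = r + s"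
    and gf: "cComp C (Spow S n X) (Spow S p Y) (Spow S n X) g f = cId C (Spow S n X)"
  shows "orb_comp C S X Y X s r (orb_cls C S Y X s (p, n, g)) (orb_cls C S X Y r (n, p, f))
       = orb_cls C S X X 0 (0, 0, cId C X)" (is "?l = ?i")
proof -
  have pn: "p = lv r n" and nr: "0 \<le> int n + r" using at_cls(3,2)[OF X Y fr] by auto
  have np: "n = lv s p" using at_cls(3)[OF Y X gr] by auto
  have fh: "f \<in> cHom C (Spow S n X) (Spow S p Y)" and gh: "g \<in> cHom C (Spow S p Y) (Spow S n X)"
    using fr gr unfolding reps_iff by auto
  note l = comp_props[OF X Y X cls_in[OF Y X gr] cls_in[OF X Y fr] z] and i = id_props[OF X]
  have "eventually (\<lambda>M. atl 0 ?l M = atl 0 ?i M) sequentially"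
    using l(2) i(2) eventually_ge_at_top[of n]
  proof eventually_elim
    case (elim M)
    define k where "k = M - n"
    have lrM: "lv r M = k + p" using lv_shift[OF nr elim(3)] pn unfolding k_def by simp
    have pL: "p \<le> lv r M" and kk: "k = lv r M - p" using lrM by auto
    have lsr: "lv s (lv r M) = M" using lv_lv[OF _ z, of M] nr elim(3) by simp
    have fr': "(n, lv r n, f) \<in> orb_reps C S X Y r" using fr unfolding pn[symmetric] .
    have gr': "(p, lv s p, g) \<in> orb_reps C S Y X s" using gr unfolding np[symmetric] .
    have af: "atl r (orb_cls C S X Y r (n, p, f)) M = Smpow S k (Spow S n X) (Spow S p Y) f"
      using cls_lift[OF X Y fr' elim(3)] pn unfolding k_def by simp
    have ag: "atl s (orb_cls C S Y X s (p, n, g)) (lv r M) = Smpow S k (Spow S p Y) (Spow S n X) g"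
      using cls_lift[OF Y X gr' pL] np kk by simp
    have oX: "Spow S k (Spow S n X) = Spow S M X" unfolding k_def using elim(3) by simp
    have oY: "Spow S k (Spow S p Y) = Spow S (lv r M) Y" using lrM by simp
    have "atl 0 ?l M = cComp C (Spow S k (Spow S n X)) (Spow S k (Spow S p Y)) (Spow S k (Spow S n X))
        (Smpow S k (Spow S p Y) (Spow S n X) g) (Smpow S k (Spow S n X) (Spow S p Y) f)"
      using elim(1) unfolding af ag lsr oX oY by simp
    also have "\<dots> = Smpow S k (Spow S n X) (Spow S n X) (cComp C (Spow S n X) (Spow S p Y) (Spow S n X) g f)"
      by (rule Smpow_comp[OF spow_ob[OF X] spow_ob[OF Y] spow_ob[OF X] fh gh, symmetric])
    also have "\<dots> = atl 0 ?i M"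
      unfolding gf Smpow_id[OF spow_ob[OF X]] oX elim(2) ..
    finally show ?case .
  qed
  then show ?thesis by (rule eventually_eq_cls[OF X X l(1) i(1)])
qed

lemma smash_iso:
  assumes X: "X \<in> cOb C" and Y: "Y \<in> cOb C"
    and fr: "(n, p, f) \<in> orb_reps C S X Y (i - j)" and gr: "(p, n, g) \<in> orb_reps C S Y X (j - i)"
    and gf: "cComp C (Spow S n X) (Spow S p Y) (Spow S n X) g f = cId C (Spow S n X)"
    and fg: "cComp C (Spow S p Y) (Spow S n X) (Spow S p Y) f g = cId C (Spow S p Y)"
  shows "is_iso (orbit_smash C S) (X, i) (Y, j) (orb_cls C S X Y (i - j) (n, p, f))"
proof -
  have "orb_comp C S X Y X (j - i) (i - j) (orb_cls C S Y X (j - i) (p, n, g)) (orb_cls C S X Y (i - j) (n, p, f))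
      = orb_cls C S X X 0 (0, 0, cId C X)"
    by (rule orb_inv_comp[OF X Y fr gr _ gf]) simp
  moreover have "orb_comp C S Y X Y (i - j) (j - i) (orb_cls C S X Y (i - j) (n, p, f)) (orb_cls C S Y X (j - i) (p, n, g))
      = orb_cls C S Y Y 0 (0, 0, cId C Y)"
    by (rule orb_inv_comp[OF Y X gr fr _ fg]) simp
  ultimately show ?thesis
    unfolding is_iso_def smash_simps using cls_in[OF X Y fr] cls_in[OF Y X gr] by blast
qed

lemma Spow_esssurj:
  assumes ES: "esssurj C C S" and X: "X \<in> cOb C"
  shows "\<exists>Y\<in>cOb C. \<exists>f. is_iso C X (Spow S k Y) f"
proof (induction k)
  case 0 then show ?case using X id_iso[OF KC X] by auto
next
  case (Suc k)
  then obtain Y f where Y: "Y \<in> cOb C" and f: "is_iso C X (Spow S k Y) f" by blast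
  obtain Y' u where Y': "Y' \<in> cOb C" and u: "is_iso C Y (fob S Y') u"
    using ES Y unfolding esssurj_def by blast
  have "is_iso C (Spow S k Y) (Spow S (Suc k) Y') (Smpow S k Y (fob S Y') u)"
    using Smpow_iso[OF Y kf_ob[OF KF Y'] u] by simp
  then have "is_iso C X (Spow S (Suc k) Y') (cComp C X (Spow S k Y) (Spow S (Suc k) Y') (Smpow S k Y (fob S Y') u) f)"
    by (rule iso_comp[OF KC X spow_ob[OF Y] spow_ob[OF Y'] f])
  then show ?case using Y' by blast
qed

text \<open>For i \<le> 0, X^(i) \<cong> (S^(-i) X)^(0) via the identity of S^(-i) X; for i > 0 choose
  X \<cong> S^i Y, then X^(i) \<cong> Y^(0).\<close>

lemma H_esssurj:
  assumes ES: "esssurj C C S"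
  shows "esssurj C (orbit_smash C S) (H_functor C S)"
  unfolding esssurj_def ball_smash H_simps
proof (intro ballI allI)
  fix X i assume X: "X \<in> cOb C"
  show "\<exists>Y\<in>cOb C. \<exists>u. is_iso (orbit_smash C S) (X, i) (Y, 0) u"
  proof (cases "i \<le> 0")
    case True
    define n where "n = nat (- i)"
    define Y where "Y = Spow S n X"
    have Yo: "Y \<in> cOb C" unfolding Y_def by (rule spow_ob[OF X])
    have idh: "cId C Y \<in> cHom C Y Y" by (rule kc_id[OF KC Yo])
    have fr: "(n, 0, cId C Y) \<in> orb_reps C S X Y (i - 0)" and gr: "(0, n, cId C Y) \<in> orb_reps C S Y X (0 - i)"
      unfolding reps_iff using idh True unfolding n_def Y_def by simp_all
    have "is_iso (orbit_smash C S) (X, i) (Y, 0) (orb_cls C S X Y (i - 0) (n, 0, cId C Y))"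
      by (rule smash_iso[OF X Yo fr gr]) (simp_all add: Y_def[symmetric] kc_idl[OF KC Yo Yo idh])
    then show ?thesis using Yo by blast
  next
    case False
    define p where "p = nat i"
    obtain Y f where Yo: "Y \<in> cOb C" and f: "is_iso C X (Spow S p Y) f"
      using Spow_esssurj[OF ES X] by blast
    obtain g where g: "is_iso C (Spow S p Y) X g" "cComp C X (Spow S p Y) X g f = cId C X"
        "cComp C (Spow S p Y) X (Spow S p Y) f g = cId C (Spow S p Y)"
      using iso_inv[OF f] .
    have fr: "(0, p, f) \<in> orb_reps C S X Y (i - 0)" and gr: "(p, 0, g) \<in> orb_reps C S Y X (0 - i)"
      unfolding reps_iff using iso_hom[OF f] iso_hom[OF g(1)] False unfolding p_def by simp_all
    have "is_iso (orbit_smash C S) (X, i) (Y, 0) (orb_cls C S X Y (i - 0) (0, p, f))"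
      by (rule smash_iso[OF X Yo fr gr]) (simp_all add: g)
    then show ?thesis using Yo by blast
  qed
qed

section \<open>The natural isomorphism S'H \<cong> HS\<close>

text \<open>Its component at X is the class of id_{SX}, read as a morphism S^1 X \<rightarrow> S^0 (S X)
  of degree -1, i.e. a morphism X^(-1) \<rightarrow> (S X)^(0).\<close>

definition shift_iso :: "'o \<Rightarrow> (nat \<times> nat \<times> 'm) set" where
  "shift_iso X = orb_cls C S X (fob S X) (-1) (1, 0, cId C (fob S X))"

lemma shift_iso_rep: "X \<in> cOb C \<Longrightarrow> (1, lv (-1) 1, cId C (fob S X)) \<in> orb_reps C S X (fob S X) (-1)"
  unfolding reps_iff lv_def using kc_id[OF KC kf_ob[OF KF]] by simp

lemma shift_iso_in: "X \<in> cOb C \<Longrightarrow> shift_iso X \<in> orb_hom C S X (fob S X) (-1)"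
  unfolding shift_iso_def using cls_in[OF _ kf_ob[OF KF] shift_iso_rep] by (simp add: lv_def)

lemma shift_iso_at:
  assumes X: "X \<in> cOb C" and M: "1 \<le> M"
  shows "atl (-1) (shift_iso X) M = cId C (Spow S M X)"
proof -
  have "atl (-1) (shift_iso X) M = Smpow S (M - 1) (Spow S 1 X) (Spow S (lv (-1) 1) (fob S X)) (cId C (fob S X))"
    unfolding shift_iso_def using cls_lift[OF X kf_ob[OF KF X] shift_iso_rep[OF X] M] by (simp add: lv_def)
  also have "\<dots> = cId C (Spow S M X)" using Smpow_id[OF kf_ob[OF KF X], of "M - 1"] M by (simp add: lv_def)
  finally show ?thesis .
qed

text \<open>Naturality: at every level M \<ge> 1 both composites have component S^M f.\<close>

lemma shift_iso_natural:
  assumes X: "X \<in> cOb C" and Y: "Y \<in> cOb C" and f: "f \<in> cHom C X Y"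
  shows "orb_comp C S X (fob S X) (fob S Y) 0 (-1) (orb_cls C S (fob S X) (fob S Y) 0 (0, 0, fmor S X Y f)) (shift_iso X)
       = orb_comp C S X Y (fob S Y) (-1) 0 (shift_iso Y) (orb_cls C S X Y 0 (0, 0, f))" (is "?l = ?r")
proof -
  have SX: "fob S X \<in> cOb C" and SY: "fob S Y \<in> cOb C" using kf_ob[OF KF X] kf_ob[OF KF Y] .
  have Sf: "fmor S X Y f \<in> cHom C (fob S X) (fob S Y)" using kf_hom[OF KF X Y f] .
  note l = comp_props[OF X SX SY H_in[OF SX SY Sf] shift_iso_in[OF X] add_0_right[symmetric]]
  note r = comp_props[OF X Y SY shift_iso_in[OF Y] H_in[OF X Y f] add_0_left[symmetric]]
  have "eventually (\<lambda>M. atl (-1) ?l M = atl (-1) ?r M) sequentially"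
    using l(2) r(2) eventually_ge_at_top[of 1]
  proof eventually_elim
    case (elim M)
    have lm: "lv (-1) M = M - Suc 0" and sM: "Suc (M - Suc 0) = M" unfolding lv_def using elim(3) by simp_all
    have fM: "Smpow S M X Y f \<in> cHom C (Spow S M X) (Spow S M Y)" by (rule Smpow_hom[OF X Y f])
    show ?case
      using elim(1,2) by (simp add: lm sM shift_iso_at[OF X elim(3)] shift_iso_at[OF Y elim(3)] H_at[OF SX SY Sf]
          H_at[OF X Y f] Smpow_fob kc_idl[OF KC spow_ob[OF X] spow_ob[OF Y] fM]
          kc_idr[OF KC spow_ob[OF X] spow_ob[OF Y] fM])
  qed
  then show ?thesis by (rule eventually_eq_cls[OF X SY l(1) r(1)])
qed

lemma shift_iso_iso: "X \<in> cOb C \<Longrightarrow> is_iso (orbit_smash C S) (X, -1) (fob S X, 0) (shift_iso X)"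
proof -
  assume X: "X \<in> cOb C"
  have SX: "fob S X \<in> cOb C" using kf_ob[OF KF X] .
  have idh: "cId C (fob S X) \<in> cHom C (fob S X) (fob S X)" by (rule kc_id[OF KC SX])
  have fr: "(1, 0, cId C (fob S X)) \<in> orb_reps C S X (fob S X) (-1 - 0)"
    and gr: "(0, 1, cId C (fob S X)) \<in> orb_reps C S (fob S X) X (0 - -1)"
    unfolding reps_iff using idh by simp_all
  show ?thesis
    using smash_iso[OF X SX fr gr] kc_idl[OF KC SX SX idh] unfolding shift_iso_def by simp
qed

theorem shift_iso_nat_iso:
  "nat_iso C (orbit_smash C S) (fun_comp shift_functor (H_functor C S)) (fun_comp (H_functor C S) S) shift_iso"
  unfolding nat_iso_def
  using kf_compose[OF H_functor shift_functor] kf_compose[OF KF H_functor]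
  by (simp add: shift_iso_iso smash_simps shift_iso_natural)

end

theorem mainTheorem17:
  fixes C :: "('o, 'm, 'k::comm_ring_1) lcat" and S :: "('o, 'm, 'o, 'm) lfun"
  assumes "klin_equivalence C C S"
  shows "klin_automorphism (orbit_smash C S) shift_functor
       \<and> klin_equivalence C (orbit_smash C S) (H_functor C S)
       \<and> (\<exists>\<eta>. nat_iso C (orbit_smash C S) (fun_comp shift_functor (H_functor C S))
                                        (fun_comp (H_functor C S) S) \<eta>)"
proof -
  have KF: "klin_functor C C S" using assms unfolding klin_equivalence_def by blast
  note S_props = equivalence_imp_fully_faithful_esssurj[OF assms]
  interpret ff_endo C S using KF S_props(1,2) by unfold_locales
  have "klin_equivalence C (orbit_smash C S) (H_functor C S)"
    using H_functor H_faithful H_full H_esssurj[OF S_props(3)]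
    by (intro fully_faithful_esssurj.equivalence) unfold_locales
  then show ?thesis using shift_automorphism shift_iso_nat_iso by blast
qed

end
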